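(* In the setting described in the context, if a bounded linear operator $T:\mathcal{H}\to\mathcal{H}$ is partially localized and weakly compact, then $$\lim_{N\to\infty}\sup_{f\in\mathcal{H},\ \|f\|_{\mathcal{H}}\le1}\int_{G\setminus E_N}\|\mathcal{W}Tf(z)\|_{H_1}^2\,dz=0.$$
   Context: Setting: $H_1,H_2$ are separable Hilbert spaces, $G$ is a separable locally compact group with left Haar measure $dz$. $\{E_N\}_{N\in\mathbb{N}}$ is a sequence of open precompact subsets of $G$ with $E_N\subseteq E_{N+1}$, $E_N^{-1}=E_N$, $E_NE_N\subseteq E_{2N}$, $\bigcup_NE_N=G$. $\{\psi_z\}_{z\in G}\subseteq H_2$ is a bounded, norm-continuous continuous Parseval frame: $\langle f,g\rangle_{H_2}=\int_G\langle f,\psi_z\rangle\langle\psi_z,g\rangle\,dz$. $\mathcal{H}=H_1\widehat\otimes H_2$. For $f\in\mathcal{H}$, $g\in H_2$, $\langle f,g\rangle_{H_2}\in H_1$ is the continuous extension of $\sum c_na_n\otimes b_n\mapsto\sum c_na_n\langle b_n,g\rangle_{H_2}$; $\mathcal{W}f(z)=\langle f,\psi_z\rangle_{H_2}$. $T_{(z,w)}h:=\langle T(h\otimes\psi_z),\psi_w\rangle_{H_2}$ for $h\in H_1$. Partially localized: $T$ is bounded on $\mathcal{H}$ and there is a continuous $\omega:G\to(0,\infty)$ with $\omega(zw)\le\omega(z)\omega(w)$ such that $\sup_z\omega(z)^{-1}\int_G\|T_{(z,w)}\|\omega(w)\,dw<\infty$, $\sup_w\omega(w)^{-1}\int_G\|T_{(z,w)}\|\omega(z)\,dz<\infty$,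 $\lim_{N\to\infty}\sup_z\omega(z)^{-1}\int_{G\setminus zE_N}\|T_{(z,w)}\|\omega(w)\,dw=0$, and $\lim_{N\to\infty}\sup_w\omega(w)^{-1}\int_{G\setminus wE_N}\|T_{(z,w)}\|\omega(z)\,dz=0$. Weakly compact: each $T_{(z,w)}$ is compact on $H_1$ and for every $M>0$, $\lim_{z\to\infty}\sup_{w\in zE_M}\|T_{(z,w)}\|_{H_1\to H_1}=0$, where $z\to\infty$ means $z$ eventually leaves every compact subset of $G$. *)

theory Defs
  imports "HOL-Analysis.Analysis"
begin

class complex_vector = real_vector +
  fixes scaleC :: "complex \<Rightarrow> 'a \<Rightarrow> 'a" (infixr "*\<^sub>C" 75)
  assumes scaleC_add_right: "a *\<^sub>C (x + y) = a *\<^sub>C x + a *\<^sub>C y"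
    and scaleC_add_left: "(a + b) *\<^sub>C x = a *\<^sub>C x + b *\<^sub>C x"
    and scaleC_scaleC: "a *\<^sub>C (b *\<^sub>C x) = (a * b) *\<^sub>C x"
    and scaleC_one: "1 *\<^sub>C x = x"
    and scaleR_scaleC: "scaleR r x = complex_of_real r *\<^sub>C x"

class complex_inner = complex_vector + real_inner +
  fixes cinner :: "'a \<Rightarrow> 'a \<Rightarrow> complex"
  assumes cinner_add_left: "cinner (x + y) z = cinner x z + cinner y z"
    and cinner_scaleC_left: "cinner (a *\<^sub>C x) y = a * cinner x y"
    and cinner_commute: "cinner x y = cnj (cinner y x)"
    and Re_cinner: "Re (cinner x y) = inner x y"

class complex_hilbert = complex_inner + complete_space

instantiation complex :: complex_hilbert
begin
definition scaleC_complex :: "complex \<Rightarrow> complex \<Rightarrow> complex" where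
  "scaleC_complex a x = a * x"
definition cinner_complex :: "complex \<Rightarrow> complex \<Rightarrow> complex" where
  "cinner_complex x y = x * cnj y"
instance
  by standard (auto simp: scaleC_complex_def cinner_complex_def algebra_simps
      inner_complex_def scaleR_conv_of_real)
end

definition bounded_clinear :: "('a::complex_inner \<Rightarrow> 'b::complex_inner) \<Rightarrow> bool" where
  "bounded_clinear f \<longleftrightarrow> bounded_linear f \<and> (\<forall>c x. f (c *\<^sub>C x) = c *\<^sub>C f x)"

definition compact_operator :: "('a::complex_inner \<Rightarrow> 'b::complex_inner) \<Rightarrow> bool" where
  "compact_operator K \<longleftrightarrow> bounded_clinear K \<and> compact (closure (K ` cball 0 1))"

definition cspan :: "'a::complex_vector set \<Rightarrow> 'a set" where
  "cspan S = {x. \<exists>F c. finite F \<and> F \<subseteq> S \<and> x = (\<Sum>s\<in>F. c s *\<^sub>C s)}"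

text \<open>ten realizes the Hilbert space tensor product H1 \<otimes> H2 as the
  space 'h: the elementary tensors have the product inner product and
  span a dense subspace (this determines H1 \<otimes> H2 up to unitary isomorphism).\<close>
definition hilbert_tensor ::
  "('a::complex_hilbert \<Rightarrow> 'b::complex_hilbert \<Rightarrow> 'h::complex_hilbert) \<Rightarrow> bool" where
  "hilbert_tensor ten \<longleftrightarrow>
     (\<forall>a a' b. ten (a + a') b = ten a b + ten a' b) \<and>
     (\<forall>a b b'. ten a (b + b') = ten a b + ten a b') \<and>
     (\<forall>c a b. ten (c *\<^sub>C a) b = c *\<^sub>C ten a b) \<and>
     (\<forall>c a b. ten a (c *\<^sub>C b) = c *\<^sub>C ten a b) \<and>
     (\<forall>a b c d. cinner (ten a b) (ten c d) = cinner a c * cinner b d) \<and>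
     closure (cspan (range (\<lambda>(a, b). ten a b))) = UNIV"

text \<open>Partial inner product \<langle>f,g\<rangle>_{H2} \<in> H1 for f \<in> H1 \<otimes> H2, g \<in> H2:
  the element x of H1 with \<langle>x,h\<rangle> = \<langle>f, h \<otimes> g\<rangle> for all h; on
  finite sums of elementary tensors it is \<Sum> c_n a_n \<langle>b_n,g\<rangle>.\<close>
definition pinner :: "('a::complex_hilbert \<Rightarrow> 'b::complex_hilbert \<Rightarrow> 'h::complex_hilbert)
    \<Rightarrow> 'h \<Rightarrow> 'b \<Rightarrow> 'a" where
  "pinner ten f g = (THE x. \<forall>h. cinner x h = cinner f (ten h g))"

definition Tloc :: "('a::complex_hilbert \<Rightarrow> 'b::complex_hilbert \<Rightarrow> 'h::complex_hilbert)
    \<Rightarrow> ('g \<Rightarrow> 'b) \<Rightarrow> ('h \<Rightarrow> 'h) \<Rightarrow> 'g \<Rightarrow> 'g \<Rightarrow> 'a \<Rightarrow> 'a" where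
  "Tloc ten \<psi> T z w = (\<lambda>h. pinner ten (T (ten h (\<psi> z))) (\<psi> w))"

text \<open>The group G is written additively (not necessarily commutative):
  z + w is the product zw, -z the inverse.\<close>

definition locally_compact_type :: "'g::topological_space itself \<Rightarrow> bool" where
  "locally_compact_type _ \<longleftrightarrow> (\<forall>x::'g. \<exists>U K. open U \<and> compact K \<and> x \<in> U \<and> U \<subseteq> K)"

text \<open>Left Haar measure: nonzero Borel measure, left invariant, finite on compact
  sets and positive on nonempty open sets (in a second countable locally compact
  Hausdorff group such measures are automatically Radon).\<close>
definition left_haar :: "'g::topological_group_add measure \<Rightarrow> bool" where
  "left_haar \<mu> \<longleftrightarrow> sets \<mu> = sets borel \<and>
     (\<forall>z. \<forall>A\<in>sets borel. emeasure \<mu> ((\<lambda>a. z + a) ` A) = emeasure \<mu> A) \<and>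
     (\<forall>K. compact K \<longrightarrow> emeasure \<mu> K < \<infinity>) \<and>
     (\<forall>U. open U \<and> U \<noteq> {} \<longrightarrow> emeasure \<mu> U > 0)"

definition cont_parseval_frame :: "'g measure \<Rightarrow> ('g \<Rightarrow> 'b::complex_hilbert) \<Rightarrow> bool" where
  "cont_parseval_frame \<mu> \<psi> \<longleftrightarrow>
     (\<forall>f g. integrable \<mu> (\<lambda>z. cinner f (\<psi> z) * cinner (\<psi> z) g) \<and>
            cinner f g = (\<integral>z. cinner f (\<psi> z) * cinner (\<psi> z) g \<partial>\<mu>))"

definition partially_localized ::
  "'g::topological_group_add measure \<Rightarrow> (nat \<Rightarrow> 'g set) \<Rightarrow> ('g \<Rightarrow> 'g \<Rightarrow> 'a::complex_hilbert \<Rightarrow> 'a)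
     \<Rightarrow> ('g \<Rightarrow> real) \<Rightarrow> bool" where
  "partially_localized \<mu> E L \<omega> \<longleftrightarrow>
     continuous_on UNIV \<omega> \<and> (\<forall>z. \<omega> z > 0) \<and> (\<forall>z w. \<omega> (z + w) \<le> \<omega> z * \<omega> w) \<and>
     (SUP z. ennreal (1 / \<omega> z) * (\<integral>\<^sup>+ w. ennreal (onorm (L z w) * \<omega> w) \<partial>\<mu>)) < \<infinity> \<and>
     (SUP w. ennreal (1 / \<omega> w) * (\<integral>\<^sup>+ z. ennreal (onorm (L z w) * \<omega> z) \<partial>\<mu>)) < \<infinity> \<and>
     ((\<lambda>N. SUP z. ennreal (1 / \<omega> z) *
         (\<integral>\<^sup>+ w \<in> - ((\<lambda>e. z + e) ` E N). ennreal (onorm (L z w) * \<omega> w) \<partial>\<mu>))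
        \<longlonglongrightarrow> 0) \<and>
     ((\<lambda>N. SUP w. ennreal (1 / \<omega> w) *
         (\<integral>\<^sup>+ z \<in> - ((\<lambda>e. w + e) ` E N). ennreal (onorm (L z w) * \<omega> z) \<partial>\<mu>))
        \<longlonglongrightarrow> 0)"

text \<open>Weakly compact; z \<rightarrow> \<infinity> means z eventually leaves every compact set.\<close>
definition weakly_compact ::
  "(nat \<Rightarrow> 'g::topological_group_add set) \<Rightarrow> ('g \<Rightarrow> 'g \<Rightarrow> 'a::complex_hilbert \<Rightarrow> 'a) \<Rightarrow> bool" where
  "weakly_compact E L \<longleftrightarrow>
     (\<forall>z w. compact_operator (L z w)) \<and>
     (\<forall>M\<ge>1. \<forall>\<epsilon>>0. \<exists>K. compact K \<and>
        (\<forall>z. z \<notin> K \<longrightarrow> (\<forall>w\<in>(\<lambda>e. z + e) ` E M. onorm (L z w) \<le> \<epsilon>)))"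

end

theory Submission
  imports Defs
begin

text \<open>The transform \<open>W F z = \<langle>F, \<psi> z\<rangle>\<^bsub>H\<^sub>2\<^esub>\<close> is an isometry into
  \<open>L\<^sup>2(G; H\<^sub>1)\<close>: Parseval's identity holds on finite sums of elementary tensors and extends
  by density. Moving \<open>T\<close> to the other side with the Riesz representation and polarising
  Parseval gives the pointwise bound
  \<open>\<parallel>W (T f) z\<parallel> \<le> \<integral> \<parallel>T\<^bsub>(w,z)\<^esub>\<parallel> \<parallel>W f w\<parallel> dw\<close>.
  Split this kernel according to whether \<open>w \<in> z E\<^sub>M\<close>. Schur's test with the weight \<open>\<omega>\<close>
  bounds the far part by \<open>\<delta>(M) C\<close>, where \<open>C\<close> and \<open>\<delta>(M)\<close> are the first and the last
  supremum in the definition of partial localisation; it is small for large \<open>M\<close>.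
  Weak compactness gives a compact \<open>K\<close> off which the near part of the kernel is at most \<open>\<epsilon>\<close>;
  once \<open>E\<^sub>N \<supseteq> K E\<^sub>M\<close>, every \<open>z \<notin> E\<^sub>N\<close> has its whole neighbourhood \<open>z E\<^sub>M\<close>
  outside \<open>K\<close>, and Schur's test with constant weight bounds the near part on
  \<open>G \<setminus> E\<^sub>N\<close> by \<open>(\<epsilon> \<mu>(E\<^sub>M))\<^sup>2\<close>.\<close>

lemma ennreal_le_if_sq_le_mult:
  fixes x :: real and J :: ennreal
  assumes "0 \<le> x" and "ennreal (x\<^sup>2) \<le> ennreal x * J"
  shows "ennreal x \<le> J"
proof (cases J)
  case (real j)
  with assms have "x * x \<le> x * j"
    by (simp add: power2_eq_square ennreal_mult[symmetric] ennreal_le_iff)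
  with \<open>0 \<le> x\<close> \<open>0 \<le> j\<close> show ?thesis
    by (cases "x = 0") (auto simp: real mult_le_cancel_left_pos)
qed simp

lemma ennreal_le_mult_if_inverse_mult_le:
  assumes "0 < r" and "ennreal (1 / r) * I \<le> C"
  shows "I \<le> C * ennreal r"
proof -
  have "I = ennreal r * (ennreal (1 / r) * I)"
    using \<open>0 < r\<close> by (simp add: mult.assoc[symmetric] flip: ennreal_mult)
  also have "\<dots> \<le> ennreal r * C"
    using assms(2) by (rule mult_left_mono) simp
  finally show ?thesis
    by (simp add: mult.commute)
qed

lemma ennreal_power2_add_le:
  fixes a b :: ennreal
  shows "(a + b)\<^sup>2 \<le> 2 * a\<^sup>2 + 2 * b\<^sup>2"
proof -
  have "(a + b)\<^sup>2 = a\<^sup>2 + 2 * a * b + b\<^sup>2"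
    by (simp add: power2_eq_square algebra_simps mult_2_right)
  also have "\<dots> \<le> a\<^sup>2 + (a\<^sup>2 + b\<^sup>2) + b\<^sup>2"
    by (intro add_mono sum_of_squares_ge_ennreal) auto
  also have "\<dots> = 2 * a\<^sup>2 + 2 * b\<^sup>2"
    by (simp add: mult_2 algebra_simps)
  finally show ?thesis .
qed

lemma small_multiplier_ennreal:
  fixes c :: ennreal
  assumes "c < \<infinity>" and "e > 0"
  obtains \<epsilon> :: real where "\<epsilon> > 0" and "2 * (ennreal \<epsilon> * c)\<^sup>2 \<le> ennreal e"
proof -
  obtain m where m: "c = ennreal m" "0 \<le> m"
    using assms(1) by (cases c) auto
  define \<epsilon> where "\<epsilon> = sqrt (e / 2) / (m + 1)"
  have "\<epsilon> > 0"
    using \<open>e > 0\<close> m by (simp add: \<epsilon>_def)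
  have "\<epsilon> * m \<le> sqrt (e / 2)"
    using \<open>e > 0\<close> m by (simp add: \<epsilon>_def field_simps)
  then have "2 * (\<epsilon> * m)\<^sup>2 \<le> e"
    using \<open>\<epsilon> > 0\<close> m \<open>e > 0\<close> power_mono[of "\<epsilon> * m" "sqrt (e / 2)" 2] by simp
  moreover have "ennreal \<epsilon> * c = ennreal (\<epsilon> * m)"
    using \<open>\<epsilon> > 0\<close> m by (simp add: ennreal_mult)
  moreover have "ennreal (\<epsilon> * m) ^ 2 = ennreal ((\<epsilon> * m)\<^sup>2)"
    using \<open>\<epsilon> > 0\<close> m by (intro ennreal_power) simp
  moreover have "2 * ennreal ((\<epsilon> * m)\<^sup>2) = ennreal (2 * (\<epsilon> * m)\<^sup>2)"
    by (simp add: ennreal_mult)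
  ultimately show ?thesis
    using that[OF \<open>\<epsilon> > 0\<close>] by (simp only: ennreal_leI)
qed

lemma tendsto_zero_ennreal_if_eventually_le:
  fixes f :: "'i \<Rightarrow> ennreal"
  assumes "\<And>e. 0 < e \<Longrightarrow> eventually (\<lambda>n. f n \<le> ennreal e) F"
  shows "(f \<longlongrightarrow> 0) F"
proof (rule order_tendstoI)
  fix a :: ennreal
  assume "0 < a"
  obtain b where "0 < b" and "b < a"
    using dense[OF \<open>0 < a\<close>] by blast
  then obtain e where "b = ennreal e" and "0 < e"
    by (cases b) (auto simp: top_unique)
  with \<open>b < a\<close> show "eventually (\<lambda>n. f n < a) F"
    using assms[OF \<open>0 < e\<close>] by (auto elim: eventually_mono)
qed simp

section \<open>Complex inner products and the Riesz representation\<close>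

lemma cinner_scaleC_right:
  fixes x y :: "'a::complex_inner"
  shows "cinner x (c *\<^sub>C y) = cnj c * cinner x y"
  by (metis cinner_commute cinner_scaleC_left complex_cnj_mult)

lemma cinner_zero_left [simp]:
  fixes y :: "'a::complex_inner"
  shows "cinner 0 y = 0"
  using cinner_add_left[of "0::'a" 0 y] by simp

lemma cinner_sum_left:
  fixes f :: "'i \<Rightarrow> 'a::complex_inner"
  shows "cinner (\<Sum>i\<in>I. f i) y = (\<Sum>i\<in>I. cinner (f i) y)"
  by (induction I rule: infinite_finite_induct) (auto simp: cinner_add_left)

lemma cinner_sum_right:
  fixes f :: "'i \<Rightarrow> 'a::complex_inner"
  shows "cinner y (\<Sum>i\<in>I. f i) = (\<Sum>i\<in>I. cinner y (f i))"
  by (subst cinner_commute) (simp add: cinner_sum_left cinner_commute[of "f _" y])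

lemma Im_cinner:
  fixes x y :: "'a::complex_inner"
  shows "Im (cinner x y) = inner x (\<i> *\<^sub>C y)"
  by (simp flip: Re_cinner add: cinner_scaleC_right)

lemma cinner_eqI_inner:
  fixes a b :: "'a::complex_inner" and c d :: "'b::complex_inner"
  assumes "inner a b = inner c d" and "inner a (\<i> *\<^sub>C b) = inner c (\<i> *\<^sub>C d)"
  shows "cinner a b = cinner c d"
  using assms by (intro complex_eqI) (simp_all add: Re_cinner Im_cinner)

lemma cinner_self:
  fixes x :: "'a::complex_inner"
  shows "cinner x x = complex_of_real ((norm x)\<^sup>2)"
proof (rule complex_eqI)
  show "Re (cinner x x) = Re (complex_of_real ((norm x)\<^sup>2))"
    by (simp add: Re_cinner power2_norm_eq_inner)
  have "Im (cinner x x) = - Im (cinner x x)"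
    using arg_cong[OF cinner_commute[of x x], of Im] by simp
  then show "Im (cinner x x) = Im (complex_of_real ((norm x)\<^sup>2))" by simp
qed

lemma inner_eqI:
  fixes x y :: "'a::real_inner"
  assumes "\<And>h. inner x h = inner y h"
  shows "x = y"
proof -
  have "inner (x - y) (x - y) = 0"
    using assms by (simp add: inner_diff_left)
  then show ?thesis by simp
qed

lemma parallelogram_law:
  fixes a b :: "'a::real_inner"
  shows "(norm (a + b))\<^sup>2 + (norm (a - b))\<^sup>2 = 2 * (norm a)\<^sup>2 + 2 * (norm b)\<^sup>2"
  by (simp add: power2_norm_eq_inner inner_add_left inner_add_right inner_diff_left
      inner_diff_right inner_commute)

text \<open>The parallelogram law turns the excess of the squared distances over the squared
  infimum into a bound for the squared distance of two points of the sequence.\<close>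
lemma Cauchy_minimizing_sequence_convex:
  fixes S :: "'a::real_inner set"
  assumes "convex S" and n_in: "\<And>k. n k \<in> S"
    and n_lim: "(\<lambda>k. dist x (n k)) \<longlonglongrightarrow> infdist x S"
  shows "Cauchy n"
proof (rule metric_CauchyI)
  fix e :: real
  assume "e > 0"
  define d where "d = infdist x S"
  define b where "b k = (dist x (n k))\<^sup>2 - d\<^sup>2" for k
  have "b \<longlonglongrightarrow> d\<^sup>2 - d\<^sup>2"
    unfolding b_def d_def by (intro tendsto_intros n_lim)
  then have "eventually (\<lambda>k. b k < e\<^sup>2 / 4) sequentially"
    using \<open>e > 0\<close> by (intro order_tendstoD) auto
  then obtain K where K: "\<And>k. k \<ge> K \<Longrightarrow> b k < e\<^sup>2 / 4"
    by (auto simp: eventually_sequentially)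
  have "dist (n j) (n k) < e" if "j \<ge> K" "k \<ge> K" for j k
  proof -
    define m where "m = midpoint (n j) (n k)"
    have "m \<in> S"
      using convex_contains_segment[THEN iffD1, OF \<open>convex S\<close>] n_in
      unfolding m_def by (meson midpoint_in_closed_segment subsetD)
    then have "2 * d \<le> 2 * dist x m"
      unfolding d_def by (simp add: infdist_le)
    also have "\<dots> = norm ((x - n j) + (x - n k))"
    proof -
      have "(x - n j) + (x - n k) = 2 *\<^sub>R (x - m)"
        using midpoint_plus_self[of "n j" "n k"] unfolding m_def scaleR_2
        by (simp add: algebra_simps)
      then show ?thesis by (simp add: dist_norm)
    qed
    finally have "(2 * d)\<^sup>2 \<le> (norm ((x - n j) + (x - n k)))\<^sup>2"
      using infdist_nonneg[of x S] by (intro power_mono) (auto simp: d_def)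
    moreover have "(norm ((x - n j) + (x - n k)))\<^sup>2 + (dist (n j) (n k))\<^sup>2
        = 2 * (dist x (n j))\<^sup>2 + 2 * (dist x (n k))\<^sup>2"
      using parallelogram_law[of "x - n j" "x - n k"] by (simp add: dist_norm norm_minus_commute)
    ultimately have "(dist (n j) (n k))\<^sup>2 \<le> 2 * b j + 2 * b k"
      by (simp add: b_def power_mult_distrib)
    also have "\<dots> < e\<^sup>2" using K[OF \<open>j \<ge> K\<close>] K[OF \<open>k \<ge> K\<close>] by linarith
    finally show ?thesis
      using \<open>e > 0\<close> by (simp add: power_less_imp_less_base)
  qed
  then show "\<exists>K. \<forall>j\<ge>K. \<forall>k\<ge>K. dist (n j) (n k) < e" by blast
qed

lemma nearest_point_exists_closed_convex:
  fixes S :: "'a::{real_inner, complete_space} set"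
  assumes "closed S" and "convex S" and "S \<noteq> {}"
  obtains y where "y \<in> S" and "\<And>z. z \<in> S \<Longrightarrow> dist x y \<le> dist x z"
proof -
  define d where "d = infdist x S"
  have "\<exists>y\<in>S. dist x y < d + 1 / Suc k" for k
  proof -
    have "(INF y\<in>S. dist x y) < d + 1 / Suc k"
      using infdist_notempty[OF \<open>S \<noteq> {}\<close>] by (simp add: d_def)
    then show ?thesis
      using \<open>S \<noteq> {}\<close> by (subst (asm) cINF_less_iff) (auto intro: bdd_belowI[of _ 0])
  qed
  then obtain n where n_in: "\<And>k. n k \<in> S" and n_less: "\<And>k. dist x (n k) < d + 1 / Suc k"
    by metis
  have "(\<lambda>k. d + 1 / Suc k) \<longlonglongrightarrow> d"
    using tendsto_add[OF tendsto_const LIMSEQ_Suc[OF lim_inverse_n'], of d] by simp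
  moreover have "\<forall>k. d \<le> dist x (n k)"
    unfolding d_def using n_in by (simp add: infdist_le)
  moreover have "\<forall>k. dist x (n k) \<le> d + 1 / Suc k"
    using n_less by (simp add: less_imp_le)
  ultimately have n_lim: "(\<lambda>k. dist x (n k)) \<longlonglongrightarrow> d"
    using tendsto_sandwich[where g = "\<lambda>k. dist x (n k)" and h = "\<lambda>k. d + 1 / Suc k",
        OF always_eventually always_eventually tendsto_const]
    by blast
  then have "Cauchy n"
    using Cauchy_minimizing_sequence_convex[OF \<open>convex S\<close> n_in] by (simp add: d_def)
  then obtain y where y: "n \<longlonglongrightarrow> y"
    using Cauchy_convergent_iff convergent_def by blast
  have "y \<in> S"
    using \<open>closed S\<close> n_in y closed_sequentially by blast
  moreover have "dist x y = d"
    using tendsto_dist[OF tendsto_const y] n_lim by (rule LIMSEQ_unique)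
  ultimately show ?thesis
    using that by (simp add: d_def infdist_le)
qed

lemma nearest_point_subspace_orthogonal:
  fixes S :: "'a::real_inner set"
  assumes "subspace S" and "y \<in> S" and nearest: "\<And>z. z \<in> S \<Longrightarrow> dist x y \<le> dist x z"
    and "m \<in> S"
  shows "inner (x - y) m = 0"
proof (cases "m = 0")
  case False
  define u where "u = x - y"
  define t where "t = inner u m / (norm m)\<^sup>2"
  have "y + t *\<^sub>R m \<in> S"
    using assms by (simp add: subspace_add subspace_scale)
  then have "norm u \<le> norm (u - t *\<^sub>R m)"
    using nearest by (simp add: u_def dist_norm algebra_simps)
  then have "(norm u)\<^sup>2 \<le> (norm (u - t *\<^sub>R m))\<^sup>2"
    by (simp add: power_mono)
  also have "\<dots> = (norm u)\<^sup>2 - 2 * t * inner u m + t\<^sup>2 * (norm m)\<^sup>2"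
    unfolding power2_norm_eq_inner
    by (simp add: inner_diff_left inner_diff_right inner_commute power2_eq_square algebra_simps)
  also have "\<dots> = (norm u)\<^sup>2 - (inner u m)\<^sup>2 / (norm m)\<^sup>2"
    using False by (simp add: t_def power2_eq_square field_simps)
  finally have "(inner u m)\<^sup>2 / (norm m)\<^sup>2 \<le> 0" by simp
  with False show ?thesis
    by (simp add: u_def divide_le_0_iff)
qed simp

lemma real_riesz_representation:
  fixes l :: "'a::{real_inner, complete_space} \<Rightarrow> real"
  assumes "bounded_linear l"
  obtains y where "\<And>x. l x = inner x y"
proof (cases "\<forall>x. l x = 0")
  case True
  then show ?thesis using that[of 0] by simp
next
  case False
  interpret l: bounded_linear l by (rule assms)
  define N where "N = {x. l x = 0}"
  from False obtain x1 where "l x1 \<noteq> 0" by blast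
  define x0 where "x0 = (1 / l x1) *\<^sub>R x1"
  have "subspace N"
    unfolding N_def by (rule linear_subspace_kernel[OF l.linear])
  moreover have "closed N"
    unfolding N_def by (intro closed_Collect_eq linear_continuous_on[OF assms] continuous_intros)
  ultimately obtain n0 where "n0 \<in> N" and nearest: "\<And>z. z \<in> N \<Longrightarrow> dist x0 n0 \<le> dist x0 z"
    using nearest_point_exists_closed_convex[OF _ subspace_imp_convex, of N x0] subspace_0
    by blast
  define u where "u = x0 - n0"
  have "l u = 1"
    using \<open>l x1 \<noteq> 0\<close> \<open>n0 \<in> N\<close> by (simp add: u_def x0_def N_def l.diff l.scale)
  have "l x = inner x ((1 / (norm u)\<^sup>2) *\<^sub>R u)" for x
  proof -
    have "x - l x *\<^sub>R u \<in> N"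
      by (simp add: N_def l.diff l.scale \<open>l u = 1\<close>)
    then have "inner u (x - l x *\<^sub>R u) = 0"
      using nearest_point_subspace_orthogonal[OF \<open>subspace N\<close> \<open>n0 \<in> N\<close> nearest]
      by (simp add: u_def)
    then have "inner u x = l x * (norm u)\<^sup>2"
      by (simp add: inner_diff_right power2_norm_eq_inner)
    moreover have "u \<noteq> 0"
      using \<open>l u = 1\<close> by auto
    ultimately show ?thesis
      by (simp add: inner_commute field_simps)
  qed
  then show ?thesis using that by blast
qed

locale hilbert_tensor_product =
  fixes ten :: "'a::complex_hilbert \<Rightarrow> 'b::complex_hilbert \<Rightarrow> 'h::complex_hilbert"
  assumes hilbert_tensor: "hilbert_tensor ten"
begin

lemma ten_add_left: "ten (a + a') b = ten a b + ten a' b"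
  and ten_add_right: "ten a (b + b') = ten a b + ten a b'"
  and ten_scaleC_left: "ten (c *\<^sub>C a) b = c *\<^sub>C ten a b"
  and ten_scaleC_right: "ten a (c *\<^sub>C b) = c *\<^sub>C ten a b"
  and cinner_ten: "cinner (ten a b) (ten a' b') = cinner a a' * cinner b b'"
  and dense_cspan_ten: "closure (cspan (range (\<lambda>(a, b). ten a b))) = UNIV"
  using hilbert_tensor unfolding hilbert_tensor_def by auto

lemma ten_scaleR_left: "ten (r *\<^sub>R a) b = r *\<^sub>R ten a b"
  and ten_scaleR_right: "ten a (r *\<^sub>R b) = r *\<^sub>R ten a b"
  by (simp_all add: scaleR_scaleC ten_scaleC_left ten_scaleC_right)

lemma inner_ten: "inner (ten a b) (ten a' b') = Re (cinner a a' * cinner b b')"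
  by (simp flip: Re_cinner add: cinner_ten)

lemma norm_ten: "norm (ten a b) = norm a * norm b"
proof -
  have "(norm (ten a b))\<^sup>2 = (norm a * norm b)\<^sup>2"
    by (simp add: power2_norm_eq_inner inner_ten cinner_self power_mult_distrib)
  then show ?thesis by (simp add: power2_eq_iff_nonneg)
qed

lemma bounded_linear_ten_left: "bounded_linear (\<lambda>a. ten a b)"
  by (rule bounded_linear_intro[of _ "norm b"]) (auto simp: ten_add_left ten_scaleR_left norm_ten)

lemma bounded_linear_ten_right: "bounded_linear (\<lambda>b. ten a b)"
  by (rule bounded_linear_intro[of _ "norm a"])
    (auto simp: ten_add_right ten_scaleR_right norm_ten mult.commute)

lemma cinner_pinner: "cinner (pinner ten F g) h = cinner F (ten h g)"
proof -
  have "bounded_linear (\<lambda>h. inner F (ten h g))"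
    by (rule bounded_linear_compose[OF bounded_linear_inner_right bounded_linear_ten_left])
  then obtain y where y: "\<And>h. inner F (ten h g) = inner h y"
    by (rule real_riesz_representation) blast
  have y_char: "cinner y h = cinner F (ten h g)" for h
  proof (rule cinner_eqI_inner)
    show "inner y h = inner F (ten h g)"
      by (simp add: y inner_commute)
    show "inner y (\<i> *\<^sub>C h) = inner F (\<i> *\<^sub>C ten h g)"
      using y[of "\<i> *\<^sub>C h"] by (simp add: inner_commute ten_scaleC_left)
  qed
  have "pinner ten F g = y"
    unfolding pinner_def
  proof (rule the_equality)
    show "\<forall>h. cinner y h = cinner F (ten h g)"
      using y_char by blast
    show "x = y" if "\<forall>h. cinner x h = cinner F (ten h g)" for x
    proof (rule inner_eqI)
      fix h
      have "cinner x h = cinner y h"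
        using that y_char by simp
      then show "inner x h = inner y h"
        by (simp flip: Re_cinner)
    qed
  qed
  then show ?thesis
    by (simp add: y_char)
qed

lemma inner_pinner: "inner (pinner ten F g) h = inner F (ten h g)"
  by (simp flip: Re_cinner add: cinner_pinner)

lemma pinner_eqI: "(\<And>h. inner x h = inner F (ten h g)) \<Longrightarrow> pinner ten F g = x"
  by (rule inner_eqI) (simp add: inner_pinner)

lemma norm_pinner_le: "norm (pinner ten F g) \<le> norm F * norm g"
proof -
  let ?x = "pinner ten F g"
  have "norm ?x * norm ?x = inner F (ten ?x g)"
    using power2_norm_eq_inner[of ?x] inner_pinner[of F g ?x] by (simp add: power2_eq_square)
  also have "\<dots> \<le> norm ?x * (norm F * norm g)"
    using norm_cauchy_schwarz[of F "ten ?x g"] by (simp add: norm_ten ac_simps)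
  finally show ?thesis
    by (cases "?x = 0") auto
qed

lemma bounded_bilinear_pinner: "bounded_bilinear (pinner ten)"
proof
  show "pinner ten (a + a') b = pinner ten a b + pinner ten a' b" for a a' b
    by (rule pinner_eqI) (simp add: inner_add_left inner_pinner)
  show "pinner ten a (b + b') = pinner ten a b + pinner ten a b'" for a b b'
    by (rule pinner_eqI) (simp add: inner_add_left inner_add_right inner_pinner ten_add_right)
  show "pinner ten (r *\<^sub>R a) b = r *\<^sub>R pinner ten a b" for r a b
    by (rule pinner_eqI) (simp add: inner_pinner)
  show "pinner ten a (r *\<^sub>R b) = r *\<^sub>R pinner ten a b" for r a b
    by (rule pinner_eqI) (simp add: inner_pinner ten_scaleR_right)
  show "\<exists>K. \<forall>a b. norm (pinner ten a b) \<le> norm a * norm b * K"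
    using norm_pinner_le by (intro exI[of _ 1]) simp
qed

lemma pinner_ten: "pinner ten (ten a b) g = cinner b g *\<^sub>C a"
  by (rule pinner_eqI)
    (simp flip: Re_cinner add: cinner_scaleC_left inner_ten cinner_ten mult.commute)

lemma cspan_ten_obtain_sum:
  assumes "F \<in> cspan (range (\<lambda>(a, b). ten a b))"
  obtains I :: "'h set" and A B where "finite I" and "F = (\<Sum>i\<in>I. ten (A i) (B i))"
proof -
  obtain S c where S: "finite S" "S \<subseteq> range (\<lambda>(a, b). ten a b)" "F = (\<Sum>s\<in>S. c s *\<^sub>C s)"
    using assms unfolding cspan_def by blast
  then have "\<forall>s\<in>S. \<exists>p. s = ten (fst p) (snd p)"
    by force
  then obtain p where p: "\<And>s. s \<in> S \<Longrightarrow> s = ten (fst (p s)) (snd (p s))"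
    by metis
  have "F = (\<Sum>s\<in>S. ten (c s *\<^sub>C fst (p s)) (snd (p s)))"
    unfolding S(3) ten_scaleC_left using p by (intro sum.cong) auto
  with S(1) show ?thesis
    by (rule that)
qed

end

section \<open>Parseval's identity for the frame transform\<close>

lemma power2_add_le_weighted:
  fixes x y t :: real
  assumes "t > 0"
  shows "(x + y)\<^sup>2 \<le> (1 + t) * x\<^sup>2 + (1 + 1 / t) * y\<^sup>2"
proof -
  have "0 \<le> (t * x - y)\<^sup>2 / t"
    using assms by simp
  also have "\<dots> = t * x\<^sup>2 - 2 * x * y + y\<^sup>2 / t"
    using assms by (simp add: power2_eq_square field_simps)
  finally show ?thesis
    by (simp add: power2_eq_square algebra_simps)
qed

lemma norm_add_sq_le_norm_diff_sq:
  fixes a b :: "'a::real_inner"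
  shows "(norm (a + b))\<^sup>2 \<le> (norm (a - b))\<^sup>2 + 4 * (norm a * norm b)"
proof -
  have "(norm (a + b))\<^sup>2 - (norm (a - b))\<^sup>2 = 4 * inner a b"
    by (simp add: power2_norm_eq_inner inner_add_left inner_add_right inner_diff_left
        inner_diff_right inner_commute)
  with norm_cauchy_schwarz[of a b] show ?thesis
    by linarith
qed

locale tensor_parseval_frame = hilbert_tensor_product ten
  for ten :: "'a::complex_hilbert \<Rightarrow> 'b::complex_hilbert \<Rightarrow> 'h::complex_hilbert" +
  fixes \<mu> :: "'g::topological_space measure" and \<psi> :: "'g \<Rightarrow> 'b"
  assumes frame: "cont_parseval_frame \<mu> \<psi>"
    and sets_\<mu>: "sets \<mu> = sets borel"
    and \<psi>_continuous: "continuous_on UNIV \<psi>"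
begin

definition W :: "'h \<Rightarrow> 'g \<Rightarrow> 'a" where
  "W F w = pinner ten F (\<psi> w)"

lemma frame_integrable: "integrable \<mu> (\<lambda>z. cinner f (\<psi> z) * cinner (\<psi> z) g)"
  and frame_integral: "cinner f g = (\<integral>z. cinner f (\<psi> z) * cinner (\<psi> z) g \<partial>\<mu>)"
  using frame unfolding cont_parseval_frame_def by blast+

lemma space_\<mu> [simp]: "space \<mu> = UNIV"
  using sets_eq_imp_space_eq[OF sets_\<mu>] by simp

lemma measurable_\<mu>_eq_borel: "measurable \<mu> N = measurable borel N"
  by (rule measurable_cong_sets) (auto simp: sets_\<mu>)

lemma continuous_on_W: "continuous_on UNIV (W F)"
  unfolding W_def
  using bounded_linear.continuous_on[OF bounded_bilinear.bounded_linear_right[OF bounded_bilinear_pinner]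
      \<psi>_continuous] .

lemma borel_measurable_W [measurable]: "W F \<in> borel_measurable \<mu>"
  unfolding measurable_\<mu>_eq_borel by (rule borel_measurable_continuous_onI[OF continuous_on_W])

lemma W_add: "W (F + G) w = W F w + W G w"
  and W_diff: "W (F - G) w = W F w - W G w"
  unfolding W_def
  by (simp_all add: bounded_bilinear.add_left[OF bounded_bilinear_pinner]
      bounded_bilinear.diff_left[OF bounded_bilinear_pinner])

lemma W_tendsto: "Fn \<longlonglongrightarrow> F \<Longrightarrow> (\<lambda>n. W (Fn n) w) \<longlonglongrightarrow> W F w"
  unfolding W_def by (intro bounded_bilinear.tendsto[OF bounded_bilinear_pinner] tendsto_const)

lemma nn_integral_W_sq_sum:
  assumes "finite I"
  shows "(\<integral>\<^sup>+w. ennreal ((norm (W (\<Sum>i\<in>I. ten (A i) (B i)) w))\<^sup>2) \<partial>\<mu>)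
    = ennreal ((norm (\<Sum>i\<in>I. ten (A i) (B i)))\<^sup>2)"
proof -
  define F where "F = (\<Sum>i\<in>I. ten (A i) (B i))"
  define c where "c i j w = cinner (A i) (A j) * (cinner (B i) (\<psi> w) * cinner (\<psi> w) (B j))"
    for i j w
  define S where "S w = (\<Sum>j\<in>I. \<Sum>i\<in>I. c i j w)" for w
  have W_F: "W F w = (\<Sum>i\<in>I. cinner (B i) (\<psi> w) *\<^sub>C A i)" for w
    unfolding W_def F_def by (simp add: bounded_bilinear.sum_left[OF bounded_bilinear_pinner] pinner_ten)
  have "cinner (W F w) (W F w) = S w" for w
    unfolding W_F S_def c_def cinner_sum_left cinner_sum_right
    by (intro sum.cong refl)
      (simp add: cinner_scaleC_left cinner_scaleC_right cinner_commute[of "\<psi> w"] ac_simps)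
  then have norm_W_F: "(norm (W F w))\<^sup>2 = Re (S w)" for w
    by (metis Re_complex_of_real cinner_self)
  have c_integrable: "integrable \<mu> (c i j)" for i j
    unfolding c_def by (intro integrable_mult_right frame_integrable)
  have "(\<integral>w. S w \<partial>\<mu>) = (\<Sum>j\<in>I. \<Sum>i\<in>I. cinner (A i) (A j) * cinner (B i) (B j))"
    unfolding S_def c_def
    by (simp add: c_integrable[unfolded c_def] frame_integral[symmetric])
  also have "\<dots> = cinner F F"
    unfolding F_def cinner_sum_left cinner_sum_right by (simp add: cinner_ten)
  finally have "(\<integral>w. S w \<partial>\<mu>) = complex_of_real ((norm F)\<^sup>2)"
    by (simp add: cinner_self)
  moreover have S_integrable: "integrable \<mu> S"
    unfolding S_def by (intro Bochner_Integration.integrable_sum c_integrable)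
  ultimately have "(\<integral>w. Re (S w) \<partial>\<mu>) = (norm F)\<^sup>2"
    by (simp add: integral_Re)
  with integrable_Re[OF S_integrable] show ?thesis
    unfolding F_def[symmetric] norm_W_F by (subst nn_integral_eq_integral) (auto simp flip: norm_W_F)
qed

lemma nn_integral_W_sq_cspan:
  assumes "F \<in> cspan (range (\<lambda>(a, b). ten a b))"
  shows "(\<integral>\<^sup>+w. ennreal ((norm (W F w))\<^sup>2) \<partial>\<mu>) = ennreal ((norm F)\<^sup>2)"
  using assms by (elim cspan_ten_obtain_sum) (simp add: nn_integral_W_sq_sum)

lemma cspan_ten_sequence:
  obtains Fn where "\<And>n. Fn n \<in> cspan (range (\<lambda>(a, b). ten a b))" and "Fn \<longlonglongrightarrow> F"
proof -
  have "F \<in> closure (cspan (range (\<lambda>(a, b). ten a b)))"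
    using dense_cspan_ten by simp
  then show ?thesis
    using that unfolding closure_sequential by blast
qed

lemma nn_integral_W_sq_le: "(\<integral>\<^sup>+w. ennreal ((norm (W F w))\<^sup>2) \<partial>\<mu>) \<le> ennreal ((norm F)\<^sup>2)"
proof -
  obtain Fn where Fn: "\<And>n. Fn n \<in> cspan (range (\<lambda>(a, b). ten a b))" "Fn \<longlonglongrightarrow> F"
    using cspan_ten_sequence[of F] by blast
  have "(\<integral>\<^sup>+w. ennreal ((norm (W F w))\<^sup>2) \<partial>\<mu>)
      = (\<integral>\<^sup>+w. liminf (\<lambda>n. ennreal ((norm (W (Fn n) w))\<^sup>2)) \<partial>\<mu>)"
    by (intro nn_integral_cong lim_imp_Liminf[symmetric] trivial_limit_sequentially
        tendsto_ennrealI tendsto_intros W_tendsto Fn(2))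
  also have "\<dots> \<le> liminf (\<lambda>n. \<integral>\<^sup>+w. ennreal ((norm (W (Fn n) w))\<^sup>2) \<partial>\<mu>)"
    by (rule nn_integral_liminf) measurable
  also have "\<dots> = ennreal ((norm F)\<^sup>2)"
    by (simp add: nn_integral_W_sq_cspan[OF Fn(1)])
      (intro lim_imp_Liminf trivial_limit_sequentially tendsto_ennrealI tendsto_intros Fn(2))
  finally show ?thesis .
qed

lemma nn_integral_W_sq_add_le:
  assumes "t > 0"
  shows "(\<integral>\<^sup>+w. ennreal ((norm (W (F + G) w))\<^sup>2) \<partial>\<mu>)
    \<le> ennreal (1 + t) * (\<integral>\<^sup>+w. ennreal ((norm (W F w))\<^sup>2) \<partial>\<mu>)
      + ennreal (1 + 1 / t) * (\<integral>\<^sup>+w. ennreal ((norm (W G w))\<^sup>2) \<partial>\<mu>)"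
proof -
  have "ennreal ((norm (W (F + G) w))\<^sup>2)
      \<le> ennreal (1 + t) * ennreal ((norm (W F w))\<^sup>2) + ennreal (1 + 1 / t) * ennreal ((norm (W G w))\<^sup>2)"
    for w
  proof -
    have "(norm (W (F + G) w))\<^sup>2 \<le> (norm (W F w) + norm (W G w))\<^sup>2"
      unfolding W_add by (intro power_mono norm_triangle_ineq) auto
    also have "\<dots> \<le> (1 + t) * (norm (W F w))\<^sup>2 + (1 + 1 / t) * (norm (W G w))\<^sup>2"
      using assms by (rule power2_add_le_weighted)
    finally show ?thesis
      using assms by (simp add: ennreal_mult[symmetric] ennreal_plus[symmetric] del: ennreal_plus)
  qed
  then have "(\<integral>\<^sup>+w. ennreal ((norm (W (F + G) w))\<^sup>2) \<partial>\<mu>)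
      \<le> (\<integral>\<^sup>+w. ennreal (1 + t) * ennreal ((norm (W F w))\<^sup>2)
          + ennreal (1 + 1 / t) * ennreal ((norm (W G w))\<^sup>2) \<partial>\<mu>)"
    by (rule nn_integral_mono)
  also have "\<dots> = ennreal (1 + t) * (\<integral>\<^sup>+w. ennreal ((norm (W F w))\<^sup>2) \<partial>\<mu>)
      + ennreal (1 + 1 / t) * (\<integral>\<^sup>+w. ennreal ((norm (W G w))\<^sup>2) \<partial>\<mu>)"
    by (simp add: nn_integral_add nn_integral_cmult)
  finally show ?thesis .
qed

text \<open>Parseval's identity extends from the dense span of the elementary tensors because
  Bessel's inequality controls the error term in the weighted triangle inequality.\<close>
lemma nn_integral_W_sq: "(\<integral>\<^sup>+w. ennreal ((norm (W F w))\<^sup>2) \<partial>\<mu>) = ennreal ((norm F)\<^sup>2)"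
proof (rule antisym[OF nn_integral_W_sq_le])
  define I where "I = (\<integral>\<^sup>+w. ennreal ((norm (W F w))\<^sup>2) \<partial>\<mu>)"
  obtain Fn where Fn: "\<And>n. Fn n \<in> cspan (range (\<lambda>(a, b). ten a b))" "Fn \<longlonglongrightarrow> F"
    using cspan_ten_sequence[of F] by blast
  have bound: "ennreal ((norm F)\<^sup>2) \<le> ennreal (1 + t) * I" if "t > 0" for t
  proof (rule LIMSEQ_le)
    show "(\<lambda>n. ennreal ((norm (Fn n))\<^sup>2)) \<longlonglongrightarrow> ennreal ((norm F)\<^sup>2)"
      by (intro tendsto_ennrealI tendsto_intros Fn(2))
    have "(\<lambda>n. ennreal ((norm (Fn n - F))\<^sup>2)) \<longlonglongrightarrow> ennreal ((norm (F - F))\<^sup>2)"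
      by (intro tendsto_ennrealI tendsto_intros Fn(2))
    then show "(\<lambda>n. ennreal (1 + t) * I + ennreal (1 + 1 / t) * ennreal ((norm (Fn n - F))\<^sup>2))
        \<longlonglongrightarrow> ennreal (1 + t) * I"
      using ennreal_tendsto_cmult[of "ennreal (1 + 1 / t)"] tendsto_add[OF tendsto_const] by fastforce
    have "ennreal ((norm (Fn n))\<^sup>2) \<le> ennreal (1 + t) * I + ennreal (1 + 1 / t) * ennreal ((norm (Fn n - F))\<^sup>2)"
      for n
    proof -
      have "ennreal ((norm (Fn n))\<^sup>2) = (\<integral>\<^sup>+w. ennreal ((norm (W (F + (Fn n - F)) w))\<^sup>2) \<partial>\<mu>)"
        by (simp add: nn_integral_W_sq_cspan[OF Fn(1)])
      also have "\<dots> \<le> ennreal (1 + t) * I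
          + ennreal (1 + 1 / t) * (\<integral>\<^sup>+w. ennreal ((norm (W (Fn n - F) w))\<^sup>2) \<partial>\<mu>)"
        unfolding I_def using \<open>t > 0\<close> by (rule nn_integral_W_sq_add_le)
      also have "\<dots> \<le> ennreal (1 + t) * I + ennreal (1 + 1 / t) * ennreal ((norm (Fn n - F))\<^sup>2)"
        by (intro add_mono mult_left_mono nn_integral_W_sq_le) auto
      finally show ?thesis .
    qed
    then show "\<exists>N. \<forall>n\<ge>N. ennreal ((norm (Fn n))\<^sup>2)
        \<le> ennreal (1 + t) * I + ennreal (1 + 1 / t) * ennreal ((norm (Fn n - F))\<^sup>2)"
      by blast
  qed
  show "ennreal ((norm F)\<^sup>2) \<le> I"
  proof (rule LIMSEQ_le_const)
    have "(\<lambda>k. ennreal (1 + 1 / Suc k)) \<longlonglongrightarrow> ennreal (1 + 0)"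
      by (intro tendsto_ennrealI tendsto_intros LIMSEQ_Suc[OF lim_inverse_n'])
    then show "(\<lambda>k. ennreal (1 + 1 / Suc k) * I) \<longlonglongrightarrow> I"
      using tendsto_mult_ennreal[OF _ tendsto_const, of _ 1 sequentially I] by simp
    show "\<exists>N. \<forall>k\<ge>N. ennreal ((norm F)\<^sup>2) \<le> ennreal (1 + 1 / Suc k) * I"
      using bound by simp
  qed
qed

text \<open>Polarization of Parseval's identity.\<close>
lemma inner_le_nn_integral_W:
  "ennreal (inner F G) \<le> (\<integral>\<^sup>+w. ennreal (norm (W F w) * norm (W G w)) \<partial>\<mu>)"
proof -
  define J where "J = (\<integral>\<^sup>+w. ennreal (norm (W F w) * norm (W G w)) \<partial>\<mu>)"
  have "ennreal ((norm (F + G))\<^sup>2) = (\<integral>\<^sup>+w. ennreal ((norm (W F w + W G w))\<^sup>2) \<partial>\<mu>)"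
    by (simp add: nn_integral_W_sq flip: W_add)
  also have "\<dots> \<le> (\<integral>\<^sup>+w. ennreal ((norm (W F w - W G w))\<^sup>2)
      + 4 * ennreal (norm (W F w) * norm (W G w)) \<partial>\<mu>)"
  proof (rule nn_integral_mono)
    fix w
    have ineq: "(norm (W F w + W G w))\<^sup>2 \<le> (norm (W F w - W G w))\<^sup>2 + 4 * (norm (W F w) * norm (W G w))"
      by (rule norm_add_sq_le_norm_diff_sq)
    show "ennreal ((norm (W F w + W G w))\<^sup>2)
        \<le> ennreal ((norm (W F w - W G w))\<^sup>2) + 4 * ennreal (norm (W F w) * norm (W G w))"
      using ennreal_leI[OF ineq] by (simp add: ennreal_mult)
  qed
  also have "\<dots> = ennreal ((norm (F - G))\<^sup>2) + 4 * J"
    unfolding J_def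
    by (simp add: nn_integral_add nn_integral_cmult nn_integral_W_sq flip: W_diff)
  finally have main: "ennreal ((norm (F + G))\<^sup>2) \<le> ennreal ((norm (F - G))\<^sup>2) + 4 * J" .
  show ?thesis
  proof (cases J)
    case (real j)
    have "ennreal ((norm (F + G))\<^sup>2) \<le> ennreal ((norm (F - G))\<^sup>2 + 4 * j)"
      using main real by (simp add: ennreal_mult)
    then have "(norm (F + G))\<^sup>2 \<le> (norm (F - G))\<^sup>2 + 4 * j"
      using real by (subst (asm) ennreal_le_iff) auto
    moreover have "(norm (F + G))\<^sup>2 - (norm (F - G))\<^sup>2 = 4 * inner F G"
      by (simp add: power2_norm_eq_inner inner_add_left inner_add_right inner_diff_left
          inner_diff_right inner_commute)
    ultimately show ?thesis
      using real by (simp add: J_def[symmetric])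
  qed (simp add: J_def[symmetric])
qed

end

section \<open>Schur's test\<close>

lemma nn_integral_Cauchy_Schwarz_weighted:
  fixes k \<phi> :: "'g \<Rightarrow> ennreal" and h :: "'g \<Rightarrow> real"
  assumes [measurable]: "k \<in> borel_measurable M" "h \<in> borel_measurable M" "\<phi> \<in> borel_measurable M"
    and h_pos: "\<And>w. h w > 0"
  shows "(\<integral>\<^sup>+w. k w * \<phi> w \<partial>M)\<^sup>2
    \<le> (\<integral>\<^sup>+w. k w * ennreal (h w) \<partial>M) * (\<integral>\<^sup>+w. k w * (\<phi> w ^ 2 * ennreal (1 / h w)) \<partial>M)"
proof -
  define f where "f w = ennreal (sqrt (h w))" for w
  define g where "g w = \<phi> w * ennreal (1 / sqrt (h w))" for w
  have [measurable]: "f \<in> borel_measurable M" "g \<in> borel_measurable M"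
    unfolding f_def g_def by measurable
  have "f w * g w = \<phi> w" for w
    using h_pos[of w] by (simp add: f_def g_def ac_simps flip: ennreal_mult)
  moreover have "f w ^ 2 = ennreal (h w)" for w
    using h_pos[of w] by (simp add: f_def ennreal_power)
  moreover have "g w ^ 2 = \<phi> w ^ 2 * ennreal (1 / h w)" for w
    using h_pos[of w] by (simp add: g_def power_mult_distrib power_divide ennreal_power)
  moreover have "(\<integral>\<^sup>+w. f w * g w \<partial>density M k)\<^sup>2
      \<le> (\<integral>\<^sup>+w. f w ^ 2 \<partial>density M k) * (\<integral>\<^sup>+w. g w ^ 2 \<partial>density M k)"
    by (rule Cauchy_Schwarz_nn_integral) measurable
  ultimately show ?thesis
    by (simp add: nn_integral_density)
qed

lemma borel_measurable_nn_integral_swap: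
  assumes "sigma_finite_measure M" and "(\<lambda>(w, z). f w z) \<in> borel_measurable (M \<Otimes>\<^sub>M N)"
  shows "(\<lambda>z. \<integral>\<^sup>+w. f w z \<partial>M) \<in> borel_measurable N"
proof -
  interpret sigma_finite_measure M
    by (rule assms(1))
  show ?thesis
    using measurable_pair_swap[OF assms(2)] by (intro borel_measurable_nn_integral) simp
qed

lemma nn_integral_kernel_swap:
  fixes K :: "'g \<Rightarrow> 'g \<Rightarrow> ennreal"
  assumes "sigma_finite_measure M"
    and [measurable]: "case_prod K \<in> borel_measurable (M \<Otimes>\<^sub>M M)" "c \<in> borel_measurable M" "q \<in> borel_measurable M"
  shows "(\<integral>\<^sup>+z. c z * (\<integral>\<^sup>+w. K w z * q w \<partial>M) \<partial>M) = (\<integral>\<^sup>+w. (\<integral>\<^sup>+z. K w z * c z \<partial>M) * q w \<partial>M)"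
proof -
  interpret pair_sigma_finite M M
    using assms(1) by (simp add: pair_sigma_finite_def)
  have [measurable]: "(\<lambda>w. K w z) \<in> borel_measurable M" if "z \<in> space M" for z
    using measurable_compose[OF measurable_Pair2'[OF that] \<open>case_prod K \<in> borel_measurable (M \<Otimes>\<^sub>M M)\<close>]
    by simp
  have [measurable]: "(\<lambda>z. K w z) \<in> borel_measurable M" if "w \<in> space M" for w
    using measurable_compose[OF measurable_Pair1'[OF that] \<open>case_prod K \<in> borel_measurable (M \<Otimes>\<^sub>M M)\<close>]
    by simp
  have "(\<integral>\<^sup>+z. c z * (\<integral>\<^sup>+w. K w z * q w \<partial>M) \<partial>M) = (\<integral>\<^sup>+z. (\<integral>\<^sup>+w. K w z * c z * q w \<partial>M) \<partial>M)"
    by (intro nn_integral_cong) (simp add: ac_simps flip: nn_integral_cmult)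
  also have "\<dots> = (\<integral>\<^sup>+w. (\<integral>\<^sup>+z. K w z * c z * q w \<partial>M) \<partial>M)"
    by (subst Fubini') simp_all
  also have "\<dots> = (\<integral>\<^sup>+w. (\<integral>\<^sup>+z. K w z * c z \<partial>M) * q w \<partial>M)"
    by (intro nn_integral_cong nn_integral_multc) measurable
  finally show ?thesis .
qed

lemma Schur_test_nn_integral:
  fixes K :: "'g \<Rightarrow> 'g \<Rightarrow> ennreal" and h :: "'g \<Rightarrow> real" and \<phi> :: "'g \<Rightarrow> ennreal"
  assumes "sigma_finite_measure M"
    and [measurable]: "case_prod K \<in> borel_measurable (M \<Otimes>\<^sub>M M)" "h \<in> borel_measurable M" "\<phi> \<in> borel_measurable M"
    and h_pos: "\<And>w. h w > 0"
    and A: "\<And>z. z \<in> space M \<Longrightarrow> (\<integral>\<^sup>+w. K w z * ennreal (h w) \<partial>M) \<le> a * ennreal (h z)"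
    and B: "\<And>w. w \<in> space M \<Longrightarrow> (\<integral>\<^sup>+z. K w z * ennreal (h z) \<partial>M) \<le> b * ennreal (h w)"
  shows "(\<integral>\<^sup>+z. (\<integral>\<^sup>+w. K w z * \<phi> w \<partial>M)\<^sup>2 \<partial>M) \<le> a * b * (\<integral>\<^sup>+w. \<phi> w ^ 2 \<partial>M)"
proof -
  have [measurable]: "(\<lambda>w. K w z) \<in> borel_measurable M" if "z \<in> space M" for z
    using measurable_compose[OF measurable_Pair2'[OF that] \<open>case_prod K \<in> borel_measurable (M \<Otimes>\<^sub>M M)\<close>]
    by simp
  define q where "q w = \<phi> w ^ 2 * ennreal (1 / h w)" for w
  have [measurable]: "q \<in> borel_measurable M"
    unfolding q_def by measurable
  have "(\<integral>\<^sup>+w. K w z * \<phi> w \<partial>M)\<^sup>2 \<le> a * (ennreal (h z) * (\<integral>\<^sup>+w. K w z * q w \<partial>M))"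
    if "z \<in> space M" for z
  proof -
    have "(\<integral>\<^sup>+w. K w z * \<phi> w \<partial>M)\<^sup>2
        \<le> (\<integral>\<^sup>+w. K w z * ennreal (h w) \<partial>M) * (\<integral>\<^sup>+w. K w z * q w \<partial>M)"
      unfolding q_def using that by (intro nn_integral_Cauchy_Schwarz_weighted) (auto simp: h_pos)
    also have "\<dots> \<le> a * ennreal (h z) * (\<integral>\<^sup>+w. K w z * q w \<partial>M)"
      using A[OF that] by (rule mult_right_mono) simp
    finally show ?thesis
      by (simp add: mult.assoc)
  qed
  then have "(\<integral>\<^sup>+z. (\<integral>\<^sup>+w. K w z * \<phi> w \<partial>M)\<^sup>2 \<partial>M)
      \<le> (\<integral>\<^sup>+z. a * (ennreal (h z) * (\<integral>\<^sup>+w. K w z * q w \<partial>M)) \<partial>M)"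
    by (rule nn_integral_mono)
  also have "\<dots> = a * (\<integral>\<^sup>+z. ennreal (h z) * (\<integral>\<^sup>+w. K w z * q w \<partial>M) \<partial>M)"
    using borel_measurable_nn_integral_swap[OF assms(1), of "\<lambda>w z. K w z * q w"]
    by (intro nn_integral_cmult) (simp add: case_prod_beta')
  also have "\<dots> = a * (\<integral>\<^sup>+w. (\<integral>\<^sup>+z. K w z * ennreal (h z) \<partial>M) * q w \<partial>M)"
    by (simp add: nn_integral_kernel_swap[OF assms(1)])
  also have "\<dots> \<le> a * (\<integral>\<^sup>+w. b * (ennreal (h w) * q w) \<partial>M)"
    using B by (intro mult_left_mono nn_integral_mono) (simp_all add: mult.assoc[symmetric] mult_right_mono)
  also have "\<dots> = a * (b * (\<integral>\<^sup>+w. \<phi> w ^ 2 \<partial>M))"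
  proof -
    have "ennreal (h w) * q w = \<phi> w ^ 2 * (ennreal (h w) * ennreal (1 / h w))" for w
      unfolding q_def by (simp only: ac_simps)
    also have "\<dots> w = \<phi> w ^ 2" for w
      using h_pos[of w] by (simp flip: ennreal_mult)
    finally show ?thesis
      by (simp add: nn_integral_cmult)
  qed
  finally show ?thesis
    by (simp add: mult.assoc)
qed

lemma ennreal_onorm_eq_SUP_dense:
  fixes f :: "'a::real_normed_vector \<Rightarrow> 'b::real_normed_vector"
  assumes "bounded_linear f" and dense: "\<And>X. open X \<Longrightarrow> X \<noteq> {} \<Longrightarrow> \<exists>d\<in>D. d \<in> X"
  shows "ennreal (onorm f) = (SUP d\<in>D. ennreal (norm (f d) / norm d))"
proof -
  define g where "g x = norm (f x) / norm x" for x
  define S where "S = (SUP d\<in>D. ennreal (g d))"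
  have g_le: "g x \<le> onorm f" for x
    using onorm[OF assms(1), of x] onorm_pos_le[OF assms(1)]
    by (cases "x = 0") (auto simp: g_def divide_le_eq mult.commute)
  have g_le_S: "ennreal (g x) \<le> S" for x
  proof (rule ccontr)
    assume "\<not> ennreal (g x) \<le> S"
    moreover have "x \<noteq> 0"
      using calculation by (auto simp: g_def)
    ultimately have "x \<in> - {0} \<inter> (\<lambda>y. ennreal (g y)) -` {S <..}"
      by (simp add: not_le)
    moreover have "continuous_on (- {0}) (\<lambda>y. ennreal (g y))"
      unfolding g_def using linear_continuous_on[OF assms(1)]
      by (intro continuous_on_ennreal continuous_intros) auto
    then have "open (- {0} \<inter> (\<lambda>y. ennreal (g y)) -` {S <..})"
      by (rule continuous_open_preimage) auto
    ultimately obtain d where "d \<in> D" and "S < ennreal (g d)"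
      using dense by blast
    then show False
      unfolding S_def using SUP_upper[of d D "\<lambda>d. ennreal (g d)"] by simp
  qed
  have "ennreal (onorm f) \<le> S"
  proof (cases S)
    case (real s)
    have "norm (f x) \<le> s * norm x" for x
      using g_le_S[of x] \<open>0 \<le> s\<close> linear_0[OF bounded_linear.linear[OF assms(1)]]
      by (cases "x = 0") (auto simp: real g_def divide_le_eq)
    then have "onorm f \<le> s"
      by (rule onorm_bound[OF \<open>0 \<le> s\<close>])
    then show ?thesis
      by (simp add: real)
  qed simp
  moreover have "S \<le> ennreal (onorm f)"
    unfolding S_def by (intro SUP_least ennreal_leI g_le)
  ultimately show ?thesis
    by (simp add: S_def g_def)
qed

lemma borel_measurable_ennreal_onorm:
  fixes L :: "'p::topological_space \<Rightarrow> 'a::{real_normed_vector, second_countable_topology}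
    \<Rightarrow> 'c::real_normed_vector"
  assumes "\<And>p. bounded_linear (L p)" and "\<And>d. continuous_on UNIV (\<lambda>p. L p d)"
  shows "(\<lambda>p. ennreal (onorm (L p))) \<in> borel_measurable borel"
proof -
  obtain D :: "'a set" where "countable D" and dense: "\<And>X. open X \<Longrightarrow> X \<noteq> {} \<Longrightarrow> \<exists>d\<in>D. d \<in> X"
    using countable_dense_exists by blast
  have [measurable]: "(\<lambda>p. L p d) \<in> borel_measurable borel" for d
    by (rule borel_measurable_continuous_onI[OF assms(2)])
  have "(\<lambda>p. SUP d\<in>D. ennreal (norm (L p d) / norm d)) \<in> borel_measurable borel"
    using \<open>countable D\<close> by measurable
  then show ?thesis
    by (simp add: ennreal_onorm_eq_SUP_dense[OF assms(1) dense])
qed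

context tensor_parseval_frame
begin

lemma bounded_linear_Tloc: "bounded_linear T \<Longrightarrow> bounded_linear (Tloc ten \<psi> T w z)"
  unfolding Tloc_def
  using bounded_linear_compose[OF bounded_bilinear.bounded_linear_left[OF bounded_bilinear_pinner]
      bounded_linear_compose[of T, OF _ bounded_linear_ten_left]] .

lemma norm_W_adjoint_le:
  assumes T: "bounded_linear T" and y: "\<And>v. inner (T v) (ten x (\<psi> z)) = inner v y"
  shows "norm (W y w) \<le> onorm (Tloc ten \<psi> T w z) * norm x"
proof -
  let ?v = "W y w" and ?L = "Tloc ten \<psi> T w z"
  have "norm ?v * norm ?v = inner ?v ?v"
    by (simp flip: power2_eq_square power2_norm_eq_inner)
  also have "\<dots> = inner (T (ten ?v (\<psi> w))) (ten x (\<psi> z))"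
    by (simp add: y W_def inner_pinner inner_commute[of y])
  also have "\<dots> = inner (?L ?v) x"
    by (simp add: Tloc_def inner_pinner)
  also have "\<dots> \<le> norm (?L ?v) * norm x"
    by (rule norm_cauchy_schwarz)
  also have "\<dots> \<le> norm ?v * (onorm ?L * norm x)"
    using mult_right_mono[OF onorm[OF bounded_linear_Tloc[OF T, of w z], of ?v] norm_ge_zero[of x]]
    by (metis mult.assoc mult.commute)
  finally show ?thesis
    by (cases "?v = 0") (auto simp: onorm_pos_le[OF bounded_linear_Tloc[OF T]])
qed

text \<open>For \<open>x = W (T f) z\<close> the Riesz representative \<open>y\<close> of \<open>v \<mapsto> \<langle>T v, x \<otimes> \<psi> z\<rangle>\<close>
  is \<open>T\<^sup>* (x \<otimes> \<psi> z)\<close>, so \<open>\<parallel>x\<parallel>\<^sup>2 = \<langle>f, y\<rangle>\<close>; polarised Parseval and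
  \<open>norm_W_adjoint_le\<close> bound this by \<open>\<parallel>x\<parallel>\<close> times the kernel integral.\<close>
lemma norm_W_le_nn_integral_onorm_Tloc:
  assumes T: "bounded_linear T"
    and [measurable]: "(\<lambda>w. ennreal (onorm (Tloc ten \<psi> T w z))) \<in> borel_measurable \<mu>"
  shows "ennreal (norm (W (T f) z))
    \<le> (\<integral>\<^sup>+w. ennreal (onorm (Tloc ten \<psi> T w z)) * ennreal (norm (W f w)) \<partial>\<mu>)"
proof (rule ennreal_le_if_sq_le_mult)
  define x where "x = W (T f) z"
  have "bounded_linear (\<lambda>v. inner (T v) (ten x (\<psi> z)))"
    by (rule bounded_linear_compose[OF bounded_linear_inner_left T])
  then obtain y where y: "\<And>v. inner (T v) (ten x (\<psi> z)) = inner v y"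
    by (rule real_riesz_representation) blast
  have "(norm x)\<^sup>2 = inner f y"
    by (simp add: power2_norm_eq_inner x_def W_def inner_pinner flip: y)
  then have "ennreal ((norm x)\<^sup>2) \<le> (\<integral>\<^sup>+w. ennreal (norm (W f w) * norm (W y w)) \<partial>\<mu>)"
    using inner_le_nn_integral_W by simp
  also have "\<dots> \<le> (\<integral>\<^sup>+w. ennreal (norm x) * (ennreal (onorm (Tloc ten \<psi> T w z)) * ennreal (norm (W f w))) \<partial>\<mu>)"
  proof (rule nn_integral_mono)
    fix w
    have "norm (W f w) * norm (W y w) \<le> norm x * (onorm (Tloc ten \<psi> T w z) * norm (W f w))"
      using mult_left_mono[OF norm_W_adjoint_le[OF T y] norm_ge_zero, of "W f w"]
      by (simp add: ac_simps)
    then show "ennreal (norm (W f w) * norm (W y w))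
        \<le> ennreal (norm x) * (ennreal (onorm (Tloc ten \<psi> T w z)) * ennreal (norm (W f w)))"
      using onorm_pos_le[OF bounded_linear_Tloc[OF T]] by (simp add: ennreal_leI flip: ennreal_mult)
  qed
  also have "\<dots> = ennreal (norm x) * (\<integral>\<^sup>+w. ennreal (onorm (Tloc ten \<psi> T w z)) * ennreal (norm (W f w)) \<partial>\<mu>)"
    by (rule nn_integral_cmult) measurable
  finally show "ennreal ((norm (W (T f) z))\<^sup>2)
      \<le> ennreal (norm (W (T f) z)) * (\<integral>\<^sup>+w. ennreal (onorm (Tloc ten \<psi> T w z)) * ennreal (norm (W f w)) \<partial>\<mu>)"
    by (simp add: x_def)
qed simp

end

lemma mem_left_translation_iff:
  fixes w z :: "'g::group_add"
  shows "z \<in> (+) w ` A \<longleftrightarrow> - w + z \<in> A"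
proof
  assume "z \<in> (+) w ` A"
  then show "- w + z \<in> A"
    by (auto simp: add.assoc[symmetric])
next
  assume "- w + z \<in> A"
  then show "z \<in> (+) w ` A"
    by (rule image_eqI[rotated]) (simp add: add.assoc[symmetric])
qed

lemma left_translation_eq_vimage:
  fixes w :: "'g::group_add"
  shows "(+) w ` A = (\<lambda>z. - w + z) -` A"
  by (auto simp: mem_left_translation_iff)

lemma open_left_translation:
  fixes w :: "'g::topological_group_add"
  shows "open A \<Longrightarrow> open ((+) w ` A)"
  unfolding left_translation_eq_vimage
  by (rule open_vimage) (simp_all add: continuous_on_add continuous_on_id)

lemma mem_left_translation_swap:
  fixes w z :: "'g::group_add"
  assumes "uminus ` A = A"
  shows "w \<in> (+) z ` A \<longleftrightarrow> z \<in> (+) w ` A"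
proof -
  have neg: "- x \<in> A" if "x \<in> A" for x
    using assms that by blast
  have "- z + w \<in> A \<longleftrightarrow> - (- z + w) \<in> A"
    using neg[of "- z + w"] neg[of "- (- z + w)"] by auto
  then show ?thesis
    by (simp add: mem_left_translation_iff minus_add)
qed

lemma exhaustion_mono:
  fixes E :: "nat \<Rightarrow> 'a set"
  assumes mono: "\<And>N. N \<ge> 1 \<Longrightarrow> E N \<subseteq> E (N + 1)" and "1 \<le> m" and "m \<le> n"
  shows "E m \<subseteq> E n"
  using \<open>m \<le> n\<close>
proof (induction n rule: dec_induct)
  case (step k)
  then show ?case
    using mono[of k] \<open>1 \<le> m\<close> by auto
qed simp

lemma eventually_compact_subset_exhaustion:
  fixes E :: "nat \<Rightarrow> 'a::topological_space set"
  assumes "compact Q" and opn: "\<And>N. N \<ge> 1 \<Longrightarrow> open (E N)"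
    and mono: "\<And>N. N \<ge> 1 \<Longrightarrow> E N \<subseteq> E (N + 1)" and cover: "(\<Union>N\<in>{1..}. E N) = UNIV"
  shows "eventually (\<lambda>N. Q \<subseteq> E N) sequentially"
proof -
  obtain J where J: "J \<subseteq> {1..}" "finite J" "Q \<subseteq> (\<Union>N\<in>J. E N)"
    using compactE_image[OF \<open>compact Q\<close>, of "{1..}" E] opn cover by auto
  have "Q \<subseteq> E N" if "N \<ge> Max (insert 1 J)" for N
  proof -
    have "E j \<subseteq> E N" if "j \<in> J" for j
    proof (rule exhaustion_mono[where E = E, OF mono])
      show "1 \<le> j"
        using J(1) \<open>j \<in> J\<close> by auto
      have "j \<le> Max (insert 1 J)"
        using J(2) \<open>j \<in> J\<close> by simp
      then show "j \<le> N"
        using \<open>N \<ge> Max (insert 1 J)\<close> by linarith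
    qed
    then show ?thesis
      using J(3) by blast
  qed
  then show ?thesis
    by (auto simp: eventually_sequentially)
qed

lemma sigma_finite_measure_exhaustion:
  fixes E :: "nat \<Rightarrow> 'a::topological_space set" and \<mu> :: "'a measure"
  assumes "sets \<mu> = sets borel" and finite: "\<And>K. compact K \<Longrightarrow> emeasure \<mu> K < \<infinity>"
    and precompact: "\<And>N. N \<ge> 1 \<Longrightarrow> compact (closure (E N))"
    and cover: "(\<Union>N\<in>{1..}. E N) = UNIV"
  shows "sigma_finite_measure \<mu>"
proof
  show "\<exists>A. countable A \<and> A \<subseteq> sets \<mu> \<and> \<Union> A = space \<mu> \<and> (\<forall>a\<in>A. emeasure \<mu> a \<noteq> \<infinity>)"
  proof (intro exI[of _ "range (\<lambda>n. closure (E (Suc n)))"] conjI)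
    have "x \<in> (\<Union>n. closure (E (Suc n)))" for x
    proof -
      obtain N where "N \<ge> 1" and "x \<in> E N"
        using cover by (metis UNIV_I UN_E atLeast_iff)
      then have "x \<in> closure (E (Suc (N - 1)))"
        using closure_subset[of "E N"] by auto
      then show ?thesis
        by blast
    qed
    moreover have "space \<mu> = UNIV"
      using sets_eq_imp_space_eq[OF assms(1)] by simp
    ultimately show "\<Union> (range (\<lambda>n. closure (E (Suc n)))) = space \<mu>"
      by (simp add: set_eq_iff)
    show "range (\<lambda>n. closure (E (Suc n))) \<subseteq> sets \<mu>"
      using assms(1) by (simp add: image_subset_iff)
    show "\<forall>a\<in>range (\<lambda>n. closure (E (Suc n))). emeasure \<mu> a \<noteq> \<infinity>"
      using finite precompact by (auto simp: less_top)
  qed simp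
qed

section \<open>Partially localised, weakly compact operators\<close>

lemma weakly_compactE:
  assumes "weakly_compact E L" and "M \<ge> 1" and "\<epsilon> > 0"
  obtains K where "compact K" and "\<And>z w. z \<notin> K \<Longrightarrow> w \<in> (+) z ` E M \<Longrightarrow> onorm (L z w) \<le> \<epsilon>"
proof -
  have "\<forall>M\<ge>1. \<forall>\<epsilon>>0. \<exists>K. compact K \<and> (\<forall>z. z \<notin> K \<longrightarrow> (\<forall>w\<in>(+) z ` E M. onorm (L z w) \<le> \<epsilon>))"
    using assms(1) unfolding weakly_compact_def by (rule conjunct2)
  from this[rule_format, OF \<open>M \<ge> 1\<close> \<open>\<epsilon> > 0\<close>] obtain K
    where "compact K" and "\<forall>z. z \<notin> K \<longrightarrow> (\<forall>w\<in>(+) z ` E M. onorm (L z w) \<le> \<epsilon>)"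
    by (elim exE conjE)
  then show ?thesis
    using that by blast
qed

lemma partially_localizedE:
  fixes \<mu> :: "'g::topological_group_add measure" and L :: "'g \<Rightarrow> 'g \<Rightarrow> 'a::complex_hilbert \<Rightarrow> 'a"
  assumes "sets \<mu> = sets borel" and "partially_localized \<mu> E L \<omega>"
  obtains C \<delta> where "\<omega> \<in> borel_measurable \<mu>" and "\<And>z. \<omega> z > 0" and "C < \<infinity>" and "\<delta> \<longlonglongrightarrow> 0"
    and "\<And>w. (\<integral>\<^sup>+ z. ennreal (onorm (L w z) * \<omega> z) \<partial>\<mu>) \<le> C * ennreal (\<omega> w)"
    and "\<And>z N. (\<integral>\<^sup>+ w \<in> - (+) z ` E N. ennreal (onorm (L w z) * \<omega> w) \<partial>\<mu>) \<le> \<delta> N * ennreal (\<omega> z)"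
proof -
  define C where "C = (SUP z. ennreal (1 / \<omega> z) * (\<integral>\<^sup>+ w. ennreal (onorm (L z w) * \<omega> w) \<partial>\<mu>))"
  define \<delta> where "\<delta> N = (SUP w. ennreal (1 / \<omega> w) *
    (\<integral>\<^sup>+ z \<in> - (+) w ` E N. ennreal (onorm (L z w) * \<omega> z) \<partial>\<mu>))" for N
  have \<omega>_continuous: "continuous_on UNIV \<omega>" and \<omega>_pos: "\<And>z. \<omega> z > 0"
    and "C < \<infinity>" and "\<delta> \<longlonglongrightarrow> 0"
    using assms(2) unfolding partially_localized_def C_def \<delta>_def by auto
  have \<omega>_measurable: "\<omega> \<in> borel_measurable \<mu>"
    unfolding measurable_cong_sets[OF assms(1) refl]
    by (rule borel_measurable_continuous_onI[OF \<omega>_continuous])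
  have C: "(\<integral>\<^sup>+ z. ennreal (onorm (L w z) * \<omega> z) \<partial>\<mu>) \<le> C * ennreal (\<omega> w)" for w
    unfolding C_def by (intro ennreal_le_mult_if_inverse_mult_le[OF \<omega>_pos] SUP_upper) simp
  have \<delta>: "(\<integral>\<^sup>+ w \<in> - (+) z ` E N. ennreal (onorm (L w z) * \<omega> w) \<partial>\<mu>) \<le> \<delta> N * ennreal (\<omega> z)"
    for z N
    unfolding \<delta>_def by (intro ennreal_le_mult_if_inverse_mult_le[OF \<omega>_pos] SUP_upper) simp
  show ?thesis
    by (rule that[OF \<omega>_measurable \<omega>_pos \<open>C < \<infinity>\<close> \<open>\<delta> \<longlonglongrightarrow> 0\<close> C \<delta>])
qed

locale localized_operator = tensor_parseval_frame ten \<mu> \<psi>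
  for ten :: "'a::{complex_hilbert, second_countable_topology} \<Rightarrow> 'b::complex_hilbert \<Rightarrow> 'h::complex_hilbert"
    and \<mu> :: "'g::{topological_group_add, second_countable_topology} measure"
    and \<psi> :: "'g \<Rightarrow> 'b" +
  fixes T :: "'h \<Rightarrow> 'h" and E :: "nat \<Rightarrow> 'g set"
  assumes bounded_linear_T: "bounded_linear T"
    and haar: "left_haar \<mu>"
    and E_open: "\<And>N. N \<ge> 1 \<Longrightarrow> open (E N)"
    and E_precompact: "\<And>N. N \<ge> 1 \<Longrightarrow> compact (closure (E N))"
    and E_mono: "\<And>N. N \<ge> 1 \<Longrightarrow> E N \<subseteq> E (N + 1)"
    and E_symm: "\<And>N. N \<ge> 1 \<Longrightarrow> uminus ` E N = E N"
    and E_cover: "(\<Union>N\<in>{1..}. E N) = UNIV"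
begin

abbreviation L :: "'g \<Rightarrow> 'g \<Rightarrow> 'a \<Rightarrow> 'a" where
  "L \<equiv> Tloc ten \<psi> T"

definition onorm_kernel :: "'g \<Rightarrow> 'g \<Rightarrow> ennreal" where
  "onorm_kernel w z = ennreal (onorm (L w z))"

definition near :: "nat \<Rightarrow> ('g \<times> 'g) set" where
  "near M = {(w, z). w \<in> (+) z ` E M}"

lemma sigma_finite_\<mu>: "sigma_finite_measure \<mu>"
  using haar E_precompact E_cover unfolding left_haar_def
  by (intro sigma_finite_measure_exhaustion[of \<mu> E]) auto

lemma sets_pair_\<mu>: "sets (\<mu> \<Otimes>\<^sub>M \<mu>) = sets borel"
proof -
  have "sets (\<mu> \<Otimes>\<^sub>M \<mu>) = sets (borel \<Otimes>\<^sub>M (borel :: 'g measure))"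
    by (rule sets_pair_measure_cong[OF sets_\<mu> sets_\<mu>])
  also have "\<dots> = sets (borel :: ('g \<times> 'g) measure)"
    by (subst borel_prod) (rule refl)
  finally show ?thesis .
qed

lemma measurable_pair_\<mu>_eq_borel: "measurable (\<mu> \<Otimes>\<^sub>M \<mu>) N = measurable borel N"
  by (rule measurable_cong_sets) (simp_all add: sets_pair_\<mu>)

lemma onorm_L_nonneg: "0 \<le> onorm (L w z)"
  by (rule onorm_pos_le[OF bounded_linear_Tloc[OF bounded_linear_T]])

lemma borel_measurable_onorm_kernel [measurable]:
  "(\<lambda>p. onorm_kernel (fst p) (snd p)) \<in> borel_measurable (\<mu> \<Otimes>\<^sub>M \<mu>)"
proof -
  have "continuous_on UNIV (\<lambda>p. L (fst p) (snd p) d)" for d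
  proof -
    have "continuous_on UNIV (\<lambda>p::'g \<times> 'g. T (ten d (\<psi> (fst p))))"
      by (intro bounded_linear.continuous_on[OF bounded_linear_T]
          bounded_linear.continuous_on[OF bounded_linear_ten_right]
          continuous_on_compose2[OF \<psi>_continuous continuous_on_fst]) auto
    moreover have "continuous_on UNIV (\<lambda>p::'g \<times> 'g. \<psi> (snd p))"
      by (intro continuous_on_compose2[OF \<psi>_continuous continuous_on_snd]) auto
    ultimately show ?thesis
      unfolding Tloc_def by (rule bounded_bilinear.continuous_on[OF bounded_bilinear_pinner])
  qed
  then have "(\<lambda>p. ennreal (onorm (L (fst p) (snd p)))) \<in> borel_measurable borel"
    by (intro borel_measurable_ennreal_onorm bounded_linear_Tloc[OF bounded_linear_T])
  then show ?thesis
    by (simp add: measurable_pair_\<mu>_eq_borel onorm_kernel_def)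
qed

lemma borel_measurable_onorm_kernel_left [measurable]: "(\<lambda>w. onorm_kernel w z) \<in> borel_measurable \<mu>"
  using measurable_compose[OF measurable_Pair2'[of z \<mu> \<mu>] borel_measurable_onorm_kernel]
  by simp

lemma norm_W_T_le: "ennreal (norm (W (T f) z)) \<le> (\<integral>\<^sup>+w. onorm_kernel w z * ennreal (norm (W f w)) \<partial>\<mu>)"
  using norm_W_le_nn_integral_onorm_Tloc[OF bounded_linear_T] borel_measurable_onorm_kernel_left[of z]
  by (simp add: onorm_kernel_def)

lemma near_sets [measurable]: "M \<ge> 1 \<Longrightarrow> near M \<in> sets (\<mu> \<Otimes>\<^sub>M \<mu>)"
proof -
  assume "M \<ge> 1"
  have "near M = (\<lambda>p. - snd p + fst p) -` E M"
    by (auto simp: near_def mem_left_translation_iff)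
  moreover have "continuous_on UNIV (\<lambda>p::'g \<times> 'g. - snd p + fst p)"
    by (intro continuous_intros)
  ultimately have "open (near M)"
    using E_open[OF \<open>M \<ge> 1\<close>] by (auto intro: open_vimage)
  then show ?thesis
    by (simp add: sets_pair_\<mu>)
qed

lemma translate_E_sets [measurable]: "M \<ge> 1 \<Longrightarrow> (+) z ` E M \<in> sets \<mu>"
  using open_left_translation[OF E_open] by (simp add: sets_\<mu>)

lemma emeasure_translate_E: "M \<ge> 1 \<Longrightarrow> emeasure \<mu> ((+) z ` E M) = emeasure \<mu> (E M)"
  using haar E_open unfolding left_haar_def by simp

lemma emeasure_E_finite: "M \<ge> 1 \<Longrightarrow> emeasure \<mu> (E M) < \<infinity>"
proof -
  assume "M \<ge> 1"
  have "emeasure \<mu> (E M) \<le> emeasure \<mu> (closure (E M))"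
    by (rule emeasure_mono) (auto simp: sets_\<mu> closure_subset)
  also have "\<dots> < \<infinity>"
    using haar E_precompact[OF \<open>M \<ge> 1\<close>] unfolding left_haar_def by blast
  finally show ?thesis .
qed

lemma far_part_le:
  fixes \<omega> :: "'g \<Rightarrow> real"
  assumes "M \<ge> 1" and [measurable]: "\<phi> \<in> borel_measurable \<mu>" "\<omega> \<in> borel_measurable \<mu>"
    and \<omega>_pos: "\<And>z. \<omega> z > 0"
    and \<delta>: "\<And>z. (\<integral>\<^sup>+ w \<in> - (+) z ` E M. ennreal (onorm (L w z) * \<omega> w) \<partial>\<mu>) \<le> \<delta> * ennreal (\<omega> z)"
    and C: "\<And>w. (\<integral>\<^sup>+ z. ennreal (onorm (L w z) * \<omega> z) \<partial>\<mu>) \<le> C * ennreal (\<omega> w)"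
  shows "(\<integral>\<^sup>+z. (\<integral>\<^sup>+w. onorm_kernel w z * indicator (- near M) (w, z) * \<phi> w \<partial>\<mu>)\<^sup>2 \<partial>\<mu>)
    \<le> \<delta> * C * (\<integral>\<^sup>+w. \<phi> w ^ 2 \<partial>\<mu>)"
proof (rule Schur_test_nn_integral[OF sigma_finite_\<mu>,
      where K = "\<lambda>w z. onorm_kernel w z * indicator (- near M) (w, z)" and h = \<omega>])
  show "(\<lambda>(w, z). onorm_kernel w z * indicator (- near M) (w, z)) \<in> borel_measurable (\<mu> \<Otimes>\<^sub>M \<mu>)"
    using \<open>M \<ge> 1\<close> by (unfold case_prod_beta') measurable
  fix z
  have "(\<integral>\<^sup>+w. onorm_kernel w z * indicator (- near M) (w, z) * ennreal (\<omega> w) \<partial>\<mu>)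
      = (\<integral>\<^sup>+ w \<in> - (+) z ` E M. ennreal (onorm (L w z) * \<omega> w) \<partial>\<mu>)"
    using \<omega>_pos onorm_L_nonneg
    by (intro nn_integral_cong) (auto simp: onorm_kernel_def near_def indicator_def ennreal_mult less_imp_le)
  also have "\<dots> \<le> \<delta> * ennreal (\<omega> z)"
    by (rule \<delta>)
  finally show "(\<integral>\<^sup>+w. onorm_kernel w z * indicator (- near M) (w, z) * ennreal (\<omega> w) \<partial>\<mu>) \<le> \<delta> * ennreal (\<omega> z)" .
next
  fix w
  have "(\<integral>\<^sup>+z. onorm_kernel w z * indicator (- near M) (w, z) * ennreal (\<omega> z) \<partial>\<mu>)
      \<le> (\<integral>\<^sup>+z. ennreal (onorm (L w z) * \<omega> z) \<partial>\<mu>)"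
    using \<omega>_pos onorm_L_nonneg
    by (intro nn_integral_mono) (auto simp: onorm_kernel_def indicator_def ennreal_mult less_imp_le)
  also have "\<dots> \<le> C * ennreal (\<omega> w)"
    by (rule C)
  finally show "(\<integral>\<^sup>+z. onorm_kernel w z * indicator (- near M) (w, z) * ennreal (\<omega> z) \<partial>\<mu>) \<le> C * ennreal (\<omega> w)" .
qed (use \<omega>_pos in auto)

lemma near_part_le:
  assumes "M \<ge> 1" and [measurable]: "\<phi> \<in> borel_measurable \<mu>" "S \<in> sets \<mu>"
    and small: "\<And>z w. z \<notin> S \<Longrightarrow> w \<in> (+) z ` E M \<Longrightarrow> onorm (L w z) \<le> \<epsilon>"
  shows "(\<integral>\<^sup>+z. (\<integral>\<^sup>+w. onorm_kernel w z * indicator (near M) (w, z) * indicator (- S) z * \<phi> w \<partial>\<mu>)\<^sup>2 \<partial>\<mu>)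
    \<le> (ennreal \<epsilon> * emeasure \<mu> (E M))\<^sup>2 * (\<integral>\<^sup>+w. \<phi> w ^ 2 \<partial>\<mu>)"
proof -
  have symm: "w \<in> (+) z ` E M \<longleftrightarrow> z \<in> (+) w ` E M" for w z
    by (rule mem_left_translation_swap[OF E_symm[OF \<open>M \<ge> 1\<close>]])
  have bound: "onorm_kernel w z * indicator (near M) (w, z) * indicator (- S) z
      \<le> ennreal \<epsilon> * indicator ((+) z ` E M) w" for w z
    using small[of z w] by (auto simp: onorm_kernel_def near_def indicator_def ennreal_leI)
  have "(\<integral>\<^sup>+z. (\<integral>\<^sup>+w. onorm_kernel w z * indicator (near M) (w, z) * indicator (- S) z * \<phi> w \<partial>\<mu>)\<^sup>2 \<partial>\<mu>)
    \<le> (ennreal \<epsilon> * emeasure \<mu> (E M)) * (ennreal \<epsilon> * emeasure \<mu> (E M)) * (\<integral>\<^sup>+w. \<phi> w ^ 2 \<partial>\<mu>)"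
  proof (rule Schur_test_nn_integral[OF sigma_finite_\<mu>,
        where K = "\<lambda>w z. onorm_kernel w z * indicator (near M) (w, z) * indicator (- S) z" and h = "\<lambda>_. 1"])
    show "(\<lambda>(w, z). onorm_kernel w z * indicator (near M) (w, z) * indicator (- S) z)
        \<in> borel_measurable (\<mu> \<Otimes>\<^sub>M \<mu>)"
      using \<open>M \<ge> 1\<close> by (unfold case_prod_beta') measurable
    fix z
    have "(\<integral>\<^sup>+w. onorm_kernel w z * indicator (near M) (w, z) * indicator (- S) z * ennreal 1 \<partial>\<mu>)
        \<le> (\<integral>\<^sup>+w. ennreal \<epsilon> * indicator ((+) z ` E M) w \<partial>\<mu>)"
      using bound by (intro nn_integral_mono) simp
    then show "(\<integral>\<^sup>+w. onorm_kernel w z * indicator (near M) (w, z) * indicator (- S) z * ennreal 1 \<partial>\<mu>)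
        \<le> ennreal \<epsilon> * emeasure \<mu> (E M) * ennreal 1"
      using \<open>M \<ge> 1\<close> by (simp add: nn_integral_cmult_indicator emeasure_translate_E)
  next
    fix w
    have "(\<integral>\<^sup>+z. onorm_kernel w z * indicator (near M) (w, z) * indicator (- S) z * ennreal 1 \<partial>\<mu>)
        \<le> (\<integral>\<^sup>+z. ennreal \<epsilon> * indicator ((+) w ` E M) z \<partial>\<mu>)"
    proof (rule nn_integral_mono)
      fix z
      show "onorm_kernel w z * indicator (near M) (w, z) * indicator (- S) z * ennreal 1
          \<le> ennreal \<epsilon> * indicator ((+) w ` E M) z"
        using bound[of w z] symm[of w z] by (simp add: indicator_def)
    qed
    then show "(\<integral>\<^sup>+z. onorm_kernel w z * indicator (near M) (w, z) * indicator (- S) z * ennreal 1 \<partial>\<mu>)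
        \<le> ennreal \<epsilon> * emeasure \<mu> (E M) * ennreal 1"
      using \<open>M \<ge> 1\<close> by (simp add: nn_integral_cmult_indicator emeasure_translate_E)
  qed auto
  then show ?thesis
    by (simp add: power2_eq_square)
qed

lemma norm_W_T_le_near_far:
  assumes "M \<ge> 1" and "z \<notin> S"
  shows "ennreal (norm (W (T f) z))
    \<le> (\<integral>\<^sup>+w. onorm_kernel w z * indicator (near M) (w, z) * indicator (- S) z * ennreal (norm (W f w)) \<partial>\<mu>)
      + (\<integral>\<^sup>+w. onorm_kernel w z * indicator (- near M) (w, z) * ennreal (norm (W f w)) \<partial>\<mu>)"
proof -
  note [measurable] = near_sets[OF \<open>M \<ge> 1\<close>]
  have "ennreal (norm (W (T f) z)) \<le> (\<integral>\<^sup>+w. onorm_kernel w z * ennreal (norm (W f w)) \<partial>\<mu>)"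
    by (rule norm_W_T_le)
  also have "\<dots> = (\<integral>\<^sup>+w. onorm_kernel w z * indicator (near M) (w, z) * indicator (- S) z * ennreal (norm (W f w))
      + onorm_kernel w z * indicator (- near M) (w, z) * ennreal (norm (W f w)) \<partial>\<mu>)"
    using \<open>z \<notin> S\<close> by (intro nn_integral_cong) (simp add: indicator_def)
  also have "\<dots> = (\<integral>\<^sup>+w. onorm_kernel w z * indicator (near M) (w, z) * indicator (- S) z * ennreal (norm (W f w)) \<partial>\<mu>)
      + (\<integral>\<^sup>+w. onorm_kernel w z * indicator (- near M) (w, z) * ennreal (norm (W f w)) \<partial>\<mu>)"
    by (rule nn_integral_add) measurable
  finally show ?thesis .
qed

lemma nn_integral_tail_le:
  fixes \<omega> :: "'g \<Rightarrow> real"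
  assumes "M \<ge> 1" and [measurable]: "S \<in> sets \<mu>" "\<omega> \<in> borel_measurable \<mu>" and "norm f \<le> 1"
    and small: "\<And>z w. z \<notin> S \<Longrightarrow> w \<in> (+) z ` E M \<Longrightarrow> onorm (L w z) \<le> \<epsilon>"
    and \<omega>_pos: "\<And>z. \<omega> z > 0"
    and \<delta>: "\<And>z. (\<integral>\<^sup>+ w \<in> - (+) z ` E M. ennreal (onorm (L w z) * \<omega> w) \<partial>\<mu>) \<le> \<delta> * ennreal (\<omega> z)"
    and C: "\<And>w. (\<integral>\<^sup>+ z. ennreal (onorm (L w z) * \<omega> z) \<partial>\<mu>) \<le> C * ennreal (\<omega> w)"
  shows "(\<integral>\<^sup>+ z \<in> - S. ennreal ((norm (W (T f) z))\<^sup>2) \<partial>\<mu>)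
    \<le> 2 * (ennreal \<epsilon> * emeasure \<mu> (E M))\<^sup>2 + 2 * (\<delta> * C)"
proof -
  note [measurable] = near_sets[OF \<open>M \<ge> 1\<close>]
  define \<phi> where "\<phi> w = ennreal (norm (W f w))" for w
  have [measurable]: "\<phi> \<in> borel_measurable \<mu>"
    unfolding \<phi>_def by measurable
  have \<phi>_sq: "(\<integral>\<^sup>+w. \<phi> w ^ 2 \<partial>\<mu>) \<le> 1"
  proof -
    have "(\<integral>\<^sup>+w. \<phi> w ^ 2 \<partial>\<mu>) \<le> ennreal ((norm f)\<^sup>2)"
      unfolding \<phi>_def using nn_integral_W_sq_le[of f] by (simp add: ennreal_power)
    also have "\<dots> \<le> 1"
      using \<open>norm f \<le> 1\<close> by (simp add: power_le_one)
    finally show ?thesis .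
  qed
  define I1 where "I1 z = (\<integral>\<^sup>+w. onorm_kernel w z * indicator (near M) (w, z) * indicator (- S) z * \<phi> w \<partial>\<mu>)"
    for z
  define I2 where "I2 z = (\<integral>\<^sup>+w. onorm_kernel w z * indicator (- near M) (w, z) * \<phi> w \<partial>\<mu>)" for z
  have [measurable]: "I1 \<in> borel_measurable \<mu>" "I2 \<in> borel_measurable \<mu>"
    unfolding I1_def I2_def
    by (intro borel_measurable_nn_integral_swap[OF sigma_finite_\<mu>]; unfold case_prod_beta'; measurable)+
  have "ennreal ((norm (W (T f) z))\<^sup>2) * indicator (- S) z \<le> 2 * (I1 z)\<^sup>2 + 2 * (I2 z)\<^sup>2" for z
  proof (cases "z \<in> S")
    case False
    have "ennreal (norm (W (T f) z)) \<le> I1 z + I2 z"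
      unfolding I1_def I2_def \<phi>_def by (rule norm_W_T_le_near_far[OF \<open>M \<ge> 1\<close> False])
    then have "(ennreal (norm (W (T f) z)))\<^sup>2 \<le> (I1 z + I2 z)\<^sup>2"
      by (rule power_mono) simp
    with False show ?thesis
      using ennreal_power2_add_le[of "I1 z" "I2 z"] by (simp add: ennreal_power)
  qed simp
  then have "(\<integral>\<^sup>+ z \<in> - S. ennreal ((norm (W (T f) z))\<^sup>2) \<partial>\<mu>)
      \<le> (\<integral>\<^sup>+z. 2 * (I1 z)\<^sup>2 + 2 * (I2 z)\<^sup>2 \<partial>\<mu>)"
    by (rule nn_integral_mono)
  also have "\<dots> = 2 * (\<integral>\<^sup>+z. (I1 z)\<^sup>2 \<partial>\<mu>) + 2 * (\<integral>\<^sup>+z. (I2 z)\<^sup>2 \<partial>\<mu>)"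
    by (subst nn_integral_add, measurable, subst (1 2) nn_integral_cmult, measurable)
  also have "\<dots> \<le> 2 * ((ennreal \<epsilon> * emeasure \<mu> (E M))\<^sup>2 * 1) + 2 * (\<delta> * C * 1)"
    unfolding I1_def I2_def
    using near_part_le[OF \<open>M \<ge> 1\<close> _ _ small] far_part_le[OF \<open>M \<ge> 1\<close> _ _ \<omega>_pos \<delta> C] \<phi>_sq
    by (intro add_mono mult_left_mono order.trans[OF _ mult_left_mono[OF \<phi>_sq]]) auto
  finally show ?thesis
    by simp
qed

text \<open>Outside the compact set \<open>K + closure (E M)\<close>, which eventually lies in \<open>E N\<close>, every
  \<open>w \<in> z + E M\<close> avoids \<open>K\<close>, so weak compactness makes \<open>L w z\<close> small.\<close>
lemma eventually_onorm_L_le: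
  assumes "M \<ge> 1" and "compact K"
    and K: "\<And>z w. z \<notin> K \<Longrightarrow> w \<in> (+) z ` E M \<Longrightarrow> onorm (L z w) \<le> \<epsilon>"
  shows "eventually (\<lambda>N. \<forall>z w. z \<notin> E N \<longrightarrow> w \<in> (+) z ` E M \<longrightarrow> onorm (L w z) \<le> \<epsilon>) sequentially"
proof -
  define Q where "Q = (\<lambda>p. fst p + snd p) ` (K \<times> closure (E M))"
  have "compact Q"
    unfolding Q_def
    by (intro compact_continuous_image compact_Times \<open>compact K\<close> E_precompact[OF \<open>M \<ge> 1\<close>]
        continuous_intros)
  then have Q_subset: "eventually (\<lambda>N. Q \<subseteq> E N) sequentially"
    using E_open E_mono E_cover by (rule eventually_compact_subset_exhaustion)
  have small: "onorm (L w z) \<le> \<epsilon>" if "Q \<subseteq> E N" "z \<notin> E N" "w \<in> (+) z ` E M" for N z w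
  proof -
    have "z \<in> (+) w ` E M"
      using that(3) mem_left_translation_swap[OF E_symm[OF \<open>M \<ge> 1\<close>]] by blast
    then obtain e where "e \<in> E M" and "z = w + e"
      by blast
    have "w \<notin> K"
    proof
      assume "w \<in> K"
      then have "z \<in> Q"
        unfolding Q_def using \<open>e \<in> E M\<close> \<open>z = w + e\<close> closure_subset
        by (intro image_eqI[of _ _ "(w, e)"]) auto
      with that(1,2) show False
        by blast
    qed
    then show ?thesis
      using \<open>z \<in> (+) w ` E M\<close> by (rule K)
  qed
  from Q_subset show ?thesis
    by (rule eventually_mono) (use small in blast)
qed

lemma eventually_SUP_tail_le:
  fixes \<omega> :: "'g \<Rightarrow> real"
  assumes "M \<ge> 1" and "e > 0" and wc: "weakly_compact E L"
    and [measurable]: "\<omega> \<in> borel_measurable \<mu>" and \<omega>_pos: "\<And>z. \<omega> z > 0"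
    and \<delta>: "\<And>z. (\<integral>\<^sup>+ w \<in> - (+) z ` E M. ennreal (onorm (L w z) * \<omega> w) \<partial>\<mu>) \<le> \<delta> * ennreal (\<omega> z)"
    and C: "\<And>w. (\<integral>\<^sup>+ z. ennreal (onorm (L w z) * \<omega> z) \<partial>\<mu>) \<le> C * ennreal (\<omega> w)"
  shows "eventually (\<lambda>N. (SUP f\<in>{f. norm f \<le> 1}. \<integral>\<^sup>+ z \<in> - E N. ennreal ((norm (W (T f) z))\<^sup>2) \<partial>\<mu>)
    \<le> ennreal e + 2 * (\<delta> * C)) sequentially"
proof -
  obtain \<epsilon> where "\<epsilon> > 0" and \<epsilon>_small: "2 * (ennreal \<epsilon> * emeasure \<mu> (E M))\<^sup>2 \<le> ennreal e"
    using emeasure_E_finite[OF \<open>M \<ge> 1\<close>] \<open>e > 0\<close> by (rule small_multiplier_ennreal)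
  obtain K where "compact K" and K: "\<And>z w. z \<notin> K \<Longrightarrow> w \<in> (+) z ` E M \<Longrightarrow> onorm (L z w) \<le> \<epsilon>"
    using weakly_compactE[OF wc \<open>M \<ge> 1\<close> \<open>\<epsilon> > 0\<close>] by blast
  have tail: "(\<integral>\<^sup>+ z \<in> - E N. ennreal ((norm (W (T f) z))\<^sup>2) \<partial>\<mu>) \<le> ennreal e + 2 * (\<delta> * C)"
    if "N \<ge> 1" and small: "\<forall>z w. z \<notin> E N \<longrightarrow> w \<in> (+) z ` E M \<longrightarrow> onorm (L w z) \<le> \<epsilon>"
      and "norm f \<le> 1" for N f
  proof -
    have "E N \<in> sets \<mu>"
      using E_open[OF \<open>N \<ge> 1\<close>] by (simp add: sets_\<mu>)
    then have "(\<integral>\<^sup>+ z \<in> - E N. ennreal ((norm (W (T f) z))\<^sup>2) \<partial>\<mu>)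
        \<le> 2 * (ennreal \<epsilon> * emeasure \<mu> (E M))\<^sup>2 + 2 * (\<delta> * C)"
      using small by (intro nn_integral_tail_le[OF \<open>M \<ge> 1\<close> _ _ \<open>norm f \<le> 1\<close> _ \<omega>_pos \<delta> C]) auto
    also have "\<dots> \<le> ennreal e + 2 * (\<delta> * C)"
      using \<epsilon>_small by (rule add_right_mono)
    finally show ?thesis .
  qed
  have "eventually (\<lambda>N. N \<ge> 1 \<and> (\<forall>z w. z \<notin> E N \<longrightarrow> w \<in> (+) z ` E M \<longrightarrow> onorm (L w z) \<le> \<epsilon>))
      sequentially"
    using eventually_ge_at_top eventually_onorm_L_le[OF \<open>M \<ge> 1\<close> \<open>compact K\<close> K]
    by (rule eventually_conj)
  then show ?thesis
    by (rule eventually_mono) (intro SUP_least tail; simp)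
qed

lemma tendsto_SUP_tail_zero:
  fixes \<omega> :: "'g \<Rightarrow> real"
  assumes "partially_localized \<mu> E L \<omega>" and "weakly_compact E L"
  shows "(\<lambda>N. SUP f\<in>{f. norm f \<le> 1}. \<integral>\<^sup>+ z \<in> - E N. ennreal ((norm (W (T f) z))\<^sup>2) \<partial>\<mu>) \<longlonglongrightarrow> 0"
proof (rule tendsto_zero_ennreal_if_eventually_le)
  obtain C \<delta> where [measurable]: "\<omega> \<in> borel_measurable \<mu>" and \<omega>_pos: "\<And>z. \<omega> z > 0"
    and "C < \<infinity>" and "\<delta> \<longlonglongrightarrow> 0"
    and C: "\<And>w. (\<integral>\<^sup>+ z. ennreal (onorm (L w z) * \<omega> z) \<partial>\<mu>) \<le> C * ennreal (\<omega> w)"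
    and \<delta>: "\<And>z N. (\<integral>\<^sup>+ w \<in> - (+) z ` E N. ennreal (onorm (L w z) * \<omega> w) \<partial>\<mu>) \<le> \<delta> N * ennreal (\<omega> z)"
    using partially_localizedE[OF sets_\<mu> assms(1)] by blast
  fix e :: real
  assume "e > 0"
  have "(\<lambda>M. \<delta> M * C) \<longlonglongrightarrow> 0 * C"
    using \<open>C < \<infinity>\<close> by (intro tendsto_mult_ennreal \<open>\<delta> \<longlonglongrightarrow> 0\<close> tendsto_const) simp
  moreover have "0 * C < ennreal (e / 4)"
    using \<open>e > 0\<close> by simp
  ultimately have "eventually (\<lambda>M. M \<ge> 1 \<and> \<delta> M * C < ennreal (e / 4)) sequentially"
    by (intro eventually_conj eventually_ge_at_top order_tendstoD(2))
  then obtain M where "M \<ge> 1" and "\<delta> M * C < ennreal (e / 4)"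
    using eventually_happens[of _ sequentially] by auto
  then have "ennreal (e / 2) + 2 * (\<delta> M * C) \<le> ennreal (e / 2) + 2 * ennreal (e / 4)"
    by (intro add_left_mono mult_left_mono) simp_all
  also have "\<dots> = ennreal e"
  proof -
    have "2 * ennreal (e / 4) = ennreal (e / 2)"
      using ennreal_mult''[of "e / 4" 2] \<open>e > 0\<close> by simp
    moreover have "ennreal (e / 2) + ennreal (e / 2) = ennreal e"
      using ennreal_plus[of "e / 2" "e / 2"] \<open>e > 0\<close> by simp
    ultimately show ?thesis
      by simp
  qed
  finally have "ennreal (e / 2) + 2 * (\<delta> M * C) \<le> ennreal e" .
  with eventually_SUP_tail_le[OF \<open>M \<ge> 1\<close> _ assms(2) _ \<omega>_pos \<delta> C, of "e / 2"] \<open>e > 0\<close>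
  show "eventually (\<lambda>N. (SUP f\<in>{f. norm f \<le> 1}. \<integral>\<^sup>+ z \<in> - E N. ennreal ((norm (W (T f) z))\<^sup>2) \<partial>\<mu>)
      \<le> ennreal e) sequentially"
    by (auto elim: eventually_mono)
qed

end

theorem lemma4p6:
  fixes ten :: "'a::{complex_hilbert, second_countable_topology} \<Rightarrow>
                'b::{complex_hilbert, second_countable_topology} \<Rightarrow> 'h::complex_hilbert"
    and \<mu> :: "'g::{topological_group_add, t2_space, second_countable_topology} measure"
    and E :: "nat \<Rightarrow> 'g set"
    and \<psi> :: "'g \<Rightarrow> 'b"
    and T :: "'h \<Rightarrow> 'h"
    and \<omega> :: "'g \<Rightarrow> real"
  assumes G_lc: "locally_compact_type TYPE('g)"
    and haar: "left_haar \<mu>"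
    and E_open: "\<And>N. N \<ge> 1 \<Longrightarrow> open (E N)"
    and E_precompact: "\<And>N. N \<ge> 1 \<Longrightarrow> compact (closure (E N))"
    and E_mono: "\<And>N. N \<ge> 1 \<Longrightarrow> E N \<subseteq> E (N + 1)"
    and E_symm: "\<And>N. N \<ge> 1 \<Longrightarrow> uminus ` E N = E N"
    and E_mult: "\<And>N x y. N \<ge> 1 \<Longrightarrow> x \<in> E N \<Longrightarrow> y \<in> E N \<Longrightarrow> x + y \<in> E (2 * N)"
    and E_cover: "(\<Union>N\<in>{1..}. E N) = UNIV"
    and \<psi>_bounded: "\<exists>B. \<forall>z. norm (\<psi> z) \<le> B"
    and \<psi>_cont: "continuous_on UNIV \<psi>"
    and frame: "cont_parseval_frame \<mu> \<psi>"
    and tensor: "hilbert_tensor ten"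
    and T_bounded: "bounded_clinear T"
    and T_ploc: "partially_localized \<mu> E (Tloc ten \<psi> T) \<omega>"
    and T_wc: "weakly_compact E (Tloc ten \<psi> T)"
  shows "(\<lambda>N. SUP f\<in>{f. norm f \<le> 1}.
            \<integral>\<^sup>+ z \<in> - E N. ennreal ((norm (pinner ten (T f) (\<psi> z)))\<^sup>2) \<partial>\<mu>)
         \<longlonglongrightarrow> 0"
proof -
  have T_linear: "bounded_linear T"
    using T_bounded by (simp add: bounded_clinear_def)
  have \<mu>_borel: "sets \<mu> = sets borel"
    using haar by (simp add: left_haar_def)
  interpret localized_operator ten \<mu> \<psi> T E
    by (intro localized_operator.intro tensor_parseval_frame.intro hilbert_tensor_product.intro
        tensor_parseval_frame_axioms.intro localized_operator_axioms.intro)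
      (fact tensor frame \<mu>_borel \<psi>_cont T_linear haar E_open E_precompact E_mono E_symm E_cover)+
  show ?thesis
    using tendsto_SUP_tail_zero[OF T_ploc T_wc] by (simp add: W_def)
qed

end
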